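(* Let $\mathscr T$ be a leafless, locally finite rooted directed tree of finite branching index, $q\geqslant1$ real, $S_{\lambda,q}$ the Dirichlet shift on $\mathscr T$, and $S_{w,q}$ the classical Dirichlet shift. Then $S_{\lambda,q}$ is unitarily equivalent to some finite orthogonal direct sum of copies of $S_{w,q}$ if and only if either $q=1$ or $\mathscr T$ is isomorphic to $\mathbb N$.
   Context: A directed tree $\mathscr T=(V,\mathcal E)$ is a directed graph with no circuits, connected, in which every non-root vertex has a unique parent; rooted means a unique vertex $\mathsf{root}$ has no parent. $\mathsf{Chi}(v)=\{u:(v,u)\in\mathcal E\}$; $\mathsf{Chi}^{\langle n\rangle}$ is the $n$-fold iterate. Locally finite: each $\mathsf{Chi}(v)$ finite; leafless: each $\mathsf{Chi}(v)$ nonempty; $V$ countably infinite. Depth $n_v$: the unique $n$ with $v\in\mathsf{Chi}^{\langle n\rangle}(\mathsf{root})$. Branching vertices $V_\prec=\{v:\mathrm{card}(\mathsf{Chi}(v))\geqslant2\}$; branching index $k_{\mathscr T}=1+\sup\{n_w:w\in V_\prec\}$ if $V_\prec\ne\emptyset$, else $0$; finite branching index means $k_{\mathscr T}<\infty$. $\mathscr T$ is isomorphic to $\mathbb N$ if there is an edge-preserving bijection onto the tree with vertices $\mathbb N$ and edges $(n,n+1)$ (equivalently $V_\prec=\emptyset$). The weighted shift on $\ell^2(V)$ with weights $\{\lambda_u\}$ is $S_\lambda e_v=\sum_{u\in\mathsf{Chi}(v)}\lambda_ue_u$. The Dirichlet shift $S_{\lambda,q}$ has weights $\lambda_{u,q}=\frac{1}{\sqrt{\mathrm{card}(\mathsf{Chi}(v))}}\sqrt{\frac{n_v+q}{n_v+1}}$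 for $u\in\mathsf{Chi}(v)$. The classical Dirichlet shift $S_{w,q}$ is the operator on $\ell^2(\mathbb N)$ given by $S_{w,q}e_n=\sqrt{\frac{n+q}{n+1}}\,e_{n+1}$. *)

theory Defs
  imports "HOL-Analysis.Analysis" "HOL-Library.Extended_Nat"
begin

definition Chi :: "('v \<times> 'v) set \<Rightarrow> 'v \<Rightarrow> 'v set" where
  "Chi E v = {u. (v, u) \<in> E}"

definition has_parent :: "('v \<times> 'v) set \<Rightarrow> 'v \<Rightarrow> bool" where
  "has_parent E u \<longleftrightarrow> (\<exists>v. (v, u) \<in> E)"

definition directed_tree :: "'v set \<Rightarrow> ('v \<times> 'v) set \<Rightarrow> bool" where
  "directed_tree V E \<longleftrightarrow>
     E \<subseteq> V \<times> V \<and>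
     (\<forall>v. (v, v) \<notin> E\<^sup>+) \<and>
     (\<forall>u\<in>V. \<forall>v\<in>V. (u, v) \<in> (E \<union> E\<inverse>)\<^sup>*) \<and>
     (\<forall>u v w. (v, u) \<in> E \<and> (w, u) \<in> E \<longrightarrow> v = w)"

definition rooted_directed_tree :: "'v set \<Rightarrow> ('v \<times> 'v) set \<Rightarrow> bool" where
  "rooted_directed_tree V E \<longleftrightarrow> directed_tree V E \<and>
     (\<exists>!r. r \<in> V \<and> \<not> has_parent E r)"

definition root :: "'v set \<Rightarrow> ('v \<times> 'v) set \<Rightarrow> 'v" where
  "root V E = (THE r. r \<in> V \<and> \<not> has_parent E r)"

definition parent :: "('v \<times> 'v) set \<Rightarrow> 'v \<Rightarrow> 'v" where
  "parent E u = (THE v. (v, u) \<in> E)"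

definition depth :: "'v set \<Rightarrow> ('v \<times> 'v) set \<Rightarrow> 'v \<Rightarrow> nat" where
  "depth V E v = (THE n. (root V E, v) \<in> E ^^ n)"

definition locally_finite :: "'v set \<Rightarrow> ('v \<times> 'v) set \<Rightarrow> bool" where
  "locally_finite V E \<longleftrightarrow> (\<forall>v\<in>V. finite (Chi E v))"

definition leafless :: "'v set \<Rightarrow> ('v \<times> 'v) set \<Rightarrow> bool" where
  "leafless V E \<longleftrightarrow> (\<forall>v\<in>V. Chi E v \<noteq> {})"

definition branching_vertices :: "'v set \<Rightarrow> ('v \<times> 'v) set \<Rightarrow> 'v set" where
  "branching_vertices V E = {v \<in> V. card (Chi E v) \<ge> 2}"

definition branching_index :: "'v set \<Rightarrow> ('v \<times> 'v) set \<Rightarrow> enat" where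
  "branching_index V E =
     (if branching_vertices V E = {} then 0
      else 1 + (SUP w\<in>branching_vertices V E. enat (depth V E w)))"

definition finite_branching_index :: "'v set \<Rightarrow> ('v \<times> 'v) set \<Rightarrow> bool" where
  "finite_branching_index V E \<longleftrightarrow> branching_index V E < \<infinity>"

definition iso_to_nat :: "'v set \<Rightarrow> ('v \<times> 'v) set \<Rightarrow> bool" where
  "iso_to_nat V E \<longleftrightarrow> (\<exists>f. bij_betw f V (UNIV :: nat set) \<and>
      (\<forall>u\<in>V. \<forall>v\<in>V. (u, v) \<in> E \<longleftrightarrow> f v = f u + 1))"

definition l2 :: "'a set \<Rightarrow> ('a \<Rightarrow> complex) set" where
  "l2 A = {f. (\<forall>x. x \<notin> A \<longrightarrow> f x = 0) \<and> (\<lambda>x. (cmod (f x))\<^sup>2) summable_on A}"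

definition l2norm :: "'a set \<Rightarrow> ('a \<Rightarrow> complex) \<Rightarrow> real" where
  "l2norm A f = sqrt (\<Sum>\<^sub>\<infinity>x\<in>A. (cmod (f x))\<^sup>2)"

definition unitary_between ::
  "'a set \<Rightarrow> 'b set \<Rightarrow> (('a \<Rightarrow> complex) \<Rightarrow> ('b \<Rightarrow> complex)) \<Rightarrow> bool" where
  "unitary_between A B U \<longleftrightarrow>
     bij_betw U (l2 A) (l2 B) \<and>
     (\<forall>f\<in>l2 A. \<forall>g\<in>l2 A. \<forall>c::complex.
        U (\<lambda>x. c * f x + g x) = (\<lambda>y. c * U f y + U g y)) \<and>
     (\<forall>f\<in>l2 A. l2norm B (U f) = l2norm A f)"

definition unitarily_equivalent ::
  "'a set \<Rightarrow> (('a \<Rightarrow> complex) \<Rightarrow> ('a \<Rightarrow> complex)) \<Rightarrow>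
   'b set \<Rightarrow> (('b \<Rightarrow> complex) \<Rightarrow> ('b \<Rightarrow> complex)) \<Rightarrow> bool" where
  "unitarily_equivalent A S B T \<longleftrightarrow>
     (\<exists>U. unitary_between A B U \<and> (\<forall>f\<in>l2 A. U (S f) = T (U f)))"

definition dirichlet_weight :: "'v set \<Rightarrow> ('v \<times> 'v) set \<Rightarrow> real \<Rightarrow> 'v \<Rightarrow> real" where
  "dirichlet_weight V E q u =
     (let v = parent E u in
        (1 / sqrt (real (card (Chi E v)))) *
        sqrt ((real (depth V E v) + q) / (real (depth V E v) + 1)))"

text \<open>Weighted shift S_lambda e_v = sum over u in Chi(v) of lambda_u e_u, i.e.
  (S_lambda f)(u) = lambda_u f(parent u) for u not the root, and 0 at the root.\<close>
definition weighted_shift ::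
  "'v set \<Rightarrow> ('v \<times> 'v) set \<Rightarrow> ('v \<Rightarrow> real) \<Rightarrow> ('v \<Rightarrow> complex) \<Rightarrow> ('v \<Rightarrow> complex)" where
  "weighted_shift V E lam f =
     (\<lambda>u. if u \<in> V \<and> has_parent E u then complex_of_real (lam u) * f (parent E u) else 0)"

definition dirichlet_shift ::
  "'v set \<Rightarrow> ('v \<times> 'v) set \<Rightarrow> real \<Rightarrow> ('v \<Rightarrow> complex) \<Rightarrow> ('v \<Rightarrow> complex)" where
  "dirichlet_shift V E q = weighted_shift V E (dirichlet_weight V E q)"

text \<open>Orthogonal direct sum of m copies of the classical Dirichlet shift
  S_{w,q} e_n = sqrt((n+q)/(n+1)) e_{n+1} on l2(N), realised on l2({..<m} x N).\<close>
definition classical_dirichlet_sum ::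
  "nat \<Rightarrow> real \<Rightarrow> (nat \<times> nat \<Rightarrow> complex) \<Rightarrow> (nat \<times> nat \<Rightarrow> complex)" where
  "classical_dirichlet_sum m q g =
     (\<lambda>(j, n). if j < m \<and> n > 0
        then complex_of_real (sqrt ((real (n - 1) + q) / (real (n - 1) + 1))) * g (j, n - 1)
        else 0)"

end

theory Submission
  imports Defs "HOL-Library.Function_Algebras"
begin

text \<open>Both the Dirichlet shift on the tree and a direct sum of copies of the classical one map the
  finite-dimensional space of functions on the \<open>n\<close>-th layer (the vertices of depth \<open>n\<close>) into the
  next layer as \<open>c n\<close> times an isometry, with \<open>c n\<^sup>2 = (n + q) / (n + 1)\<close>. Two such layered shifts
  with layers of equal dimensions are unitarily equivalent: choose orthonormal bases layer by layer,
  completing the image of the previous basis by Gram--Schmidt. For \<open>q = 1\<close> the coefficients are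
  all \<open>1\<close>, so copies of \<open>\<nat>\<close> started at different layers realise every nondecreasing, eventually
  constant sequence of layer sizes, which is what a finite branching index gives; a tree isomorphic
  to \<open>\<nat>\<close> has one vertex per layer.

  Conversely, let \<open>q > 1\<close>. Then \<open>c n\<^sup>2 < c 0\<^sup>2 = q\<close> for \<open>n > 0\<close>, so the vectors whose norm is
  stretched by the factor \<open>q\<close> are those living on layer \<open>0\<close>: one dimension for the tree, \<open>m\<close> for
  the direct sum, whence \<open>m = 1\<close>. The unitary then carries \<open>S\<^sup>k \<delta>\<^sub>r\<^sub>o\<^sub>o\<^sub>t\<close> to a multiple of
  \<open>e\<^sub>k\<close>; as it preserves inner products, it carries \<open>\<delta>\<^sub>x\<close> to a multiple of \<open>e\<^sub>n\<close> for
  every vertex \<open>x\<close> of depth \<open>n\<close>, and two vertices of the same depth would give two orthogonal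
  nonzero vectors on the line spanned by \<open>e\<^sub>n\<close>.\<close>

section \<open>Inner products on finite sets and Gram--Schmidt\<close>

interpretation cvec: vector_space "\<lambda>(c::complex) (f::'a \<Rightarrow> complex) x. c * f x"
  by unfold_locales (auto simp: fun_eq_iff algebra_simps)

lemma sum_apply: "(\<Sum>v\<in>A. g v) x = (\<Sum>v\<in>A. g v x)"
  by (induction A rule: infinite_finite_induct) auto

definition inner_on :: "'a set \<Rightarrow> ('a \<Rightarrow> complex) \<Rightarrow> ('a \<Rightarrow> complex) \<Rightarrow> complex" where
  "inner_on X f g = (\<Sum>x\<in>X. f x * cnj (g x))"

definition orthonormal_fam :: "'a set \<Rightarrow> (nat \<Rightarrow> 'a \<Rightarrow> complex) \<Rightarrow> nat \<Rightarrow> bool" where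
  "orthonormal_fam X b d \<longleftrightarrow> (\<forall>i<d. \<forall>x. x \<notin> X \<longrightarrow> b i x = 0) \<and>
     (\<forall>i<d. \<forall>j<d. inner_on X (b i) (b j) = (if i = j then 1 else 0))"

definition delta_at :: "'a \<Rightarrow> 'a \<Rightarrow> complex" where
  "delta_at x = (\<lambda>y. if y = x then 1 else 0)"

lemma inner_on_cong:
  "(\<And>x. x \<in> X \<Longrightarrow> f x = f' x) \<Longrightarrow> (\<And>x. x \<in> X \<Longrightarrow> g x = g' x) \<Longrightarrow> inner_on X f g = inner_on X f' g'"
  unfolding inner_on_def by simp

lemma inner_on_self: "inner_on X f f = complex_of_real (\<Sum>x\<in>X. (cmod (f x))\<^sup>2)"
  unfolding inner_on_def of_real_sum by (simp only: complex_norm_square)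

lemma inner_on_cnj: "inner_on X f g = cnj (inner_on X g f)"
  unfolding inner_on_def by (simp add: mult.commute)

lemma inner_on_linear_left: "inner_on X (\<lambda>x. k * f x + g x) h = k * inner_on X f h + inner_on X g h"
  unfolding inner_on_def by (simp add: sum.distrib sum_distrib_left algebra_simps)

lemma inner_on_scale_left: "inner_on X (\<lambda>x. k * f x) h = k * inner_on X f h"
  unfolding inner_on_def by (simp add: sum_distrib_left mult.assoc)

lemma inner_on_divide_left: "inner_on X (\<lambda>y. f y / c) w = inner_on X f w / c"
  unfolding inner_on_def by (simp add: sum_divide_distrib)

lemma inner_on_divide_right:
  "inner_on X w (\<lambda>y. f y / complex_of_real c) = inner_on X w f / complex_of_real c"
  unfolding inner_on_def by (simp add: sum_divide_distrib)

lemma inner_on_sum_left: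
  "inner_on X (\<Sum>i\<in>I. (\<lambda>x. c i * h i x)) w = (\<Sum>i\<in>I. c i * inner_on X (h i) w)"
  unfolding inner_on_def sum_apply
  by (simp add: sum_distrib_right sum_distrib_left mult.assoc sum.swap[of _ X])

lemma inner_on_sum_right:
  "inner_on X f (\<Sum>i\<in>I. (\<lambda>x. a i * h i x)) = (\<Sum>i\<in>I. cnj (a i) * inner_on X f (h i))"
  by (subst inner_on_cnj) (simp add: inner_on_sum_left inner_on_cnj[of X f])

lemma inner_on_diff_sum_left:
  "inner_on X (\<lambda>y. f y - (\<Sum>i\<in>I. c i * h i y)) w = inner_on X f w - (\<Sum>i\<in>I. c i * inner_on X (h i) w)"
  unfolding inner_on_def
  by (simp add: left_diff_distrib sum_subtractf sum_distrib_right sum_distrib_left mult.assoc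
      sum.swap[of _ X])

lemma orthonormal_fam_0: "orthonormal_fam X b 0"
  by (simp add: orthonormal_fam_def)

lemma orthonormal_fam_sum_coeff:
  assumes "orthonormal_fam X b D" "K \<le> D" "i < D"
  shows "(\<Sum>k<K. a k * inner_on X (b k) (b i)) = (if i < K then a i else 0)"
proof -
  have "(\<Sum>k<K. a k * inner_on X (b k) (b i)) = (\<Sum>k<K. if k = i then a k else 0)"
    using assms by (intro sum.cong) (auto simp: orthonormal_fam_def)
  then show ?thesis by simp
qed

lemma orthonormal_fam_inj_on: assumes "orthonormal_fam X b d" shows "inj_on b {..<d}"
proof (rule inj_onI)
  fix i j assume ij: "i \<in> {..<d}" "j \<in> {..<d}" "b i = b j"
  then have "inner_on X (b i) (b j) = 1" using assms by (auto simp: orthonormal_fam_def)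
  then show "i = j" using assms ij(1,2) by (auto simp: orthonormal_fam_def split: if_splits)
qed

lemma orthonormal_fam_independent:
  assumes "orthonormal_fam X b d" shows "cvec.independent (b ` {..<d})"
proof (rule cvec.independent_if_scalars_zero)
  show "finite (b ` {..<d})" by simp
  fix u v assume s: "(\<Sum>x\<in>b ` {..<d}. (\<lambda>y. u x * x y)) = 0" and v: "v \<in> b ` {..<d}"
  then obtain j where j: "j < d" "v = b j" by auto
  have "0 = inner_on X (\<Sum>x\<in>b ` {..<d}. (\<lambda>y. u x * x y)) (b j)" using s by (simp add: inner_on_def)
  also have "\<dots> = (\<Sum>i<d. u (b i) * inner_on X (b i) (b j))"
    by (simp add: inner_on_sum_left sum.reindex[OF orthonormal_fam_inj_on[OF assms]])
  also have "\<dots> = u v" using orthonormal_fam_sum_coeff[OF assms order_refl j(1)] j by simp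
  finally show "u v = 0" by simp
qed

lemma inj_delta_at: "inj delta_at"
  by (auto simp: inj_on_def delta_at_def fun_eq_iff split: if_splits)

lemma in_span_delta_at:
  assumes "finite X" "\<And>y. y \<notin> X \<Longrightarrow> g y = 0"
  shows "g \<in> cvec.span (delta_at ` X)"
proof -
  have "g = (\<Sum>x\<in>X. (\<lambda>y. g x * delta_at x y))"
    using assms by (auto simp: fun_eq_iff sum_apply delta_at_def if_distrib cong: if_cong)
  also have "\<dots> \<in> cvec.span (delta_at ` X)"
    by (intro cvec.span_sum cvec.span_scale cvec.span_base) auto
  finally show ?thesis .
qed

lemma delta_at_independent: assumes "finite X" shows "cvec.independent (delta_at ` X)"
proof (rule cvec.independent_if_scalars_zero)
  show "finite (delta_at ` X)" using assms by simp
  fix u v assume s: "(\<Sum>x\<in>delta_at ` X. (\<lambda>y. u x * x y)) = 0" and v: "v \<in> delta_at ` X"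
  then obtain z where z: "z \<in> X" "v = delta_at z" by auto
  have inj: "inj_on delta_at X" by (rule inj_on_subset[OF inj_delta_at]) simp
  have "0 = (\<Sum>x\<in>delta_at ` X. (\<lambda>y. u x * x y)) z" using s by simp
  also have "\<dots> = (\<Sum>x\<in>X. u (delta_at x) * delta_at x z)"
    by (simp add: sum_apply sum.reindex[OF inj])
  also have "\<dots> = (\<Sum>x\<in>X. if x = z then u (delta_at x) else 0)"
    by (intro sum.cong) (auto simp: delta_at_def)
  also have "\<dots> = u v" using z assms by simp
  finally show "u v = 0" by simp
qed

lemma card_delta_at: "card (delta_at ` X) = card X"
  by (rule card_image[OF inj_on_subset[OF inj_delta_at]]) simp

lemma independent_le_card:
  assumes "finite X" "cvec.independent B" "\<And>g y. g \<in> B \<Longrightarrow> y \<notin> X \<Longrightarrow> g y = 0"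
  shows "finite B" "card B \<le> card X"
proof -
  have "finite (delta_at ` X)" using assms(1) by simp
  moreover have "B \<subseteq> cvec.span (delta_at ` X)" using assms by (auto intro!: in_span_delta_at)
  ultimately have "finite B \<and> card B \<le> card (delta_at ` X)"
    by (rule cvec.independent_span_bound[OF _ assms(2)])
  then show "finite B" "card B \<le> card X" by (simp_all add: card_delta_at)
qed

lemma orthonormal_fam_le_card:
  assumes "finite X" "orthonormal_fam X b d" shows "d \<le> card X"
  using independent_le_card[OF assms(1) orthonormal_fam_independent[OF assms(2)]] assms(2)
    card_image[OF orthonormal_fam_inj_on[OF assms(2)]] by (auto simp: orthonormal_fam_def)

text \<open>An orthonormal family of \<open>card X\<close> vectors spans.\<close>
lemma orthonormal_fam_expansion:
  assumes X: "finite X" and b: "orthonormal_fam X b (card X)" and x: "x \<in> X"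
  shows "f x = (\<Sum>i<card X. inner_on X f (b i) * b i x)"
proof -
  define n where "n = card X"
  define B where "B = b ` {..<n}"
  define g where "g = (\<lambda>y. if y \<in> X then f y else 0)"
  have inj: "inj_on b {..<n}" using orthonormal_fam_inj_on[OF b] n_def by simp
  have ind: "cvec.independent B" unfolding B_def n_def by (rule orthonormal_fam_independent[OF b])
  have "g \<in> cvec.span B"
  proof (rule ccontr)
    assume ns: "g \<notin> cvec.span B"
    have "\<And>h y. h \<in> insert g B \<Longrightarrow> y \<notin> X \<Longrightarrow> h y = 0"
      using b by (auto simp: B_def n_def g_def orthonormal_fam_def)
    then have "card (insert g B) \<le> card X"
      by (rule independent_le_card(2)[OF X cvec.independent_insertI[OF ns ind]])
    moreover have "g \<notin> B" using ns cvec.span_base by blast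
    then have "card (insert g B) = Suc n" unfolding B_def using card_image[OF inj] by simp
    ultimately show False by (simp add: n_def)
  qed
  then obtain u where "g = (\<Sum>v\<in>B. (\<lambda>y. u v * v y))"
    using cvec.span_finite[of B] B_def by auto
  then have g: "g = (\<Sum>i<n. (\<lambda>y. u (b i) * b i y))"
    unfolding B_def by (simp add: sum.reindex[OF inj])
  have coeff: "inner_on X f (b j) = u (b j)" if "j < n" for j
  proof -
    have "inner_on X f (b j) = inner_on X g (b j)" by (rule inner_on_cong) (simp_all add: g_def)
    also have "\<dots> = u (b j)"
      unfolding g inner_on_sum_left
      using orthonormal_fam_sum_coeff[OF b order_refl, of j] that n_def
      by simp
    finally show ?thesis .
  qed
  have "f x = g x" using x by (simp add: g_def)
  also have "\<dots> = (\<Sum>i<n. inner_on X f (b i) * b i x)" unfolding g by (simp add: sum_apply coeff)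
  finally show ?thesis unfolding n_def .
qed

lemma orthonormal_fam_step:
  assumes X: "finite X" and b: "orthonormal_fam X b k" and k: "k < card X"
  shows "\<exists>w. orthonormal_fam X (b(k := w)) (Suc k)"
proof -
  define B where "B = b ` {..<k}"
  obtain x where x: "x \<in> X" "delta_at x \<notin> cvec.span B"
  proof (rule ccontr)
    assume "\<not> thesis"
    with that have "delta_at ` X \<subseteq> cvec.span B" by auto
    then have "card (delta_at ` X) \<le> card B"
      using cvec.independent_span_bound[OF _ delta_at_independent[OF X]] B_def by auto
    then show False using card_image_le[of "{..<k}" b] k card_delta_at[of X] by (simp add: B_def)
  qed
  define v where "v = (\<lambda>y. delta_at x y - (\<Sum>i<k. inner_on X (delta_at x) (b i) * b i y))"
  have v_out: "v y = 0" if "y \<notin> X" for y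
    using that x b unfolding v_def orthonormal_fam_def delta_at_def by auto
  have "\<exists>y. v y \<noteq> 0"
  proof (rule ccontr)
    assume "\<not> ?thesis"
    then have "delta_at x = (\<Sum>i<k. (\<lambda>y. inner_on X (delta_at x) (b i) * b i y))"
      unfolding v_def by (auto simp: fun_eq_iff sum_apply)
    also have "\<dots> \<in> cvec.span B"
      unfolding B_def by (intro cvec.span_sum cvec.span_scale cvec.span_base) auto
    finally show False using x by simp
  qed
  then obtain y0 where y0: "v y0 \<noteq> 0" by auto
  define r where "r = (\<Sum>y\<in>X. (cmod (v y))\<^sup>2)"
  have "r > 0"
    unfolding r_def using y0 v_out X by (intro sum_pos2[of X y0]) auto
  moreover have "inner_on X v v = complex_of_real r" unfolding r_def by (rule inner_on_self)
  ultimately have w_norm: "inner_on X w w = 1" if "w = (\<lambda>y. v y / complex_of_real (sqrt r))" for w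
    unfolding that inner_on_divide_left inner_on_divide_right
    by (simp add: field_simps flip: of_real_mult)
  have v_orth: "inner_on X v (b j) = 0" if "j < k" for j
    unfolding v_def inner_on_diff_sum_left
    using orthonormal_fam_sum_coeff[OF b order_refl that] that
    by simp
  define w where "w = (\<lambda>y. v y / complex_of_real (sqrt r))"
  have "inner_on X w (b j) = 0" "inner_on X (b j) w = 0" if "j < k" for j
    using v_orth[OF that] inner_on_cnj[of X "b j" w] unfolding w_def inner_on_divide_left
    by simp_all
  then have "orthonormal_fam X (b(k := w)) (Suc k)"
    using b w_norm[OF w_def] v_out unfolding orthonormal_fam_def w_def
    by (auto simp: less_Suc_eq)
  then show ?thesis by blast
qed

lemma orthonormal_fam_extend:
  assumes "finite X" "orthonormal_fam X b k" "k \<le> card X"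
  shows "\<exists>b'. orthonormal_fam X b' (card X) \<and> (\<forall>i<k. b' i = b i)"
  using assms(2,3)
proof (induction "card X - k" arbitrary: b k)
  case 0
  then show ?case by (intro exI[of _ b]) auto
next
  case (Suc n)
  then have k: "k < card X" by simp
  obtain w where "orthonormal_fam X (b(k := w)) (Suc k)"
    using orthonormal_fam_step[OF assms(1) Suc.prems(1) k] by blast
  from Suc.hyps(1)[of "Suc k", OF _ this] Suc.hyps(2) k show ?case by fastforce
qed

section \<open>Layered shifts\<close>

definition layer :: "'a set \<Rightarrow> ('a \<Rightarrow> nat) \<Rightarrow> nat \<Rightarrow> 'a set" where
  "layer A la n = {x\<in>A. la x = n}"

lemma layer_iff: "x \<in> layer A la n \<longleftrightarrow> x \<in> A \<and> la x = n"
  by (simp add: layer_def)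

lemma has_sum_layers_iff:
  fixes g :: "'a \<Rightarrow> real"
  assumes fin: "\<And>n. finite (layer A la n)" and nonneg: "\<And>x. g x \<ge> 0"
  shows "(g has_sum s) A \<longleftrightarrow> ((\<lambda>n. sum g (layer A la n)) has_sum s) UNIV"
proof -
  have A: "A = (\<Union>n. layer A la n)" and disj: "disjoint_family (layer A la)"
    by (auto simp: layer_def disjoint_family_on_def)
  have summable: "g summable_on A \<longleftrightarrow> (\<lambda>n. sum g (layer A la n)) summable_on UNIV"
    by (subst A, rule summable_on_Union_iff) (use fin nonneg disj in auto)
  have sums: "((\<lambda>n. sum g (layer A la n)) has_sum s) UNIV" if "(g has_sum s) A" for s
  proof -
    have inj: "inj_on snd (Sigma UNIV (layer A la))" using disj
      by (auto simp: inj_on_def disjoint_family_on_def)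
    have "snd ` Sigma UNIV (layer A la) = A" by (subst A) force
    with that have "((g \<circ> snd) has_sum s) (Sigma UNIV (layer A la))"
      using has_sum_reindex[OF inj, of g] by simp
    then show ?thesis by (rule has_sum_SigmaD) (use fin in auto)
  qed
  show ?thesis
    using sums summable has_sum_infsum has_sum_unique
    by (metis has_sum_imp_summable)
qed

definition parent_shift ::
  "('a \<Rightarrow> bool) \<Rightarrow> ('a \<Rightarrow> real) \<Rightarrow> ('a \<Rightarrow> 'a) \<Rightarrow> ('a \<Rightarrow> complex) \<Rightarrow> ('a \<Rightarrow> complex)" where
  "parent_shift R w p f = (\<lambda>x. if R x then complex_of_real (w x) * f (p x) else 0)"

lemma parent_shift_sum:
  "parent_shift R w p (\<Sum>k\<in>K. (\<lambda>x. a k * h k x)) = (\<Sum>k\<in>K. (\<lambda>x. a k * parent_shift R w p (h k) x))"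
  unfolding parent_shift_def by (auto simp: fun_eq_iff sum_apply sum_distrib_left algebra_simps)

text \<open>Such a shift maps the functions on layer \<open>n\<close> to those on layer \<open>n + 1\<close> as \<open>c n\<close> times an
  isometry; see \<open>inner_on_shift\<close>.\<close>
locale layered_shift =
  fixes A :: "'a set" and la :: "'a \<Rightarrow> nat" and R :: "'a \<Rightarrow> bool" and w :: "'a \<Rightarrow> real"
    and p :: "'a \<Rightarrow> 'a" and c :: "nat \<Rightarrow> real"
  assumes finite_layer: "finite (layer A la n)"
    and shifts_layer: "R x \<Longrightarrow> x \<in> A \<and> p x \<in> A \<and> la x = Suc (la (p x))"
    and children_weights: "v \<in> A \<Longrightarrow> (\<Sum>x\<in>{x. R x \<and> p x = v}. (w x)\<^sup>2) = (c (la v))\<^sup>2"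
begin

abbreviation "S \<equiv> parent_shift R w p"

lemma shift_outside: "x \<notin> A \<Longrightarrow> S f x = 0"
  unfolding parent_shift_def using shifts_layer by auto

lemma shift_layer_0: "la x = 0 \<Longrightarrow> S f x = 0"
  unfolding parent_shift_def using shifts_layer by fastforce

lemma shift_local:
  "x \<in> layer A la (Suc n) \<Longrightarrow> (\<And>y. y \<in> layer A la n \<Longrightarrow> f y = g y) \<Longrightarrow> S f x = S g x"
  unfolding parent_shift_def layer_def using shifts_layer by auto

lemma shift_support:
  assumes "\<And>y. y \<notin> layer A la n \<Longrightarrow> f y = 0" "x \<notin> layer A la (Suc n)"
  shows "S f x = 0"
  using assms shifts_layer[of x] by (auto simp: parent_shift_def layer_def)

lemma inner_on_shift:
  "inner_on (layer A la (Suc n)) (S f) (S g)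
    = complex_of_real ((c n)\<^sup>2) * inner_on (layer A la n) f g"
proof -
  let ?L = "layer A la (Suc n)" and ?K = "layer A la n"
  let ?Ch = "\<lambda>v. {x. R x \<and> p x = v}"
  have "inner_on ?L (S f) (S g) = (\<Sum>x\<in>{x\<in>?L. R x}. S f x * cnj (S g x))"
    unfolding inner_on_def
    by (rule sum.mono_neutral_right) (auto simp: finite_layer parent_shift_def)
  also have "\<dots> = (\<Sum>v\<in>?K. \<Sum>x\<in>{x\<in>{x\<in>?L. R x}. p x = v}. S f x * cnj (S g x))"
    by (rule sum.group[symmetric])
      (use finite_layer shifts_layer in
        \<open>auto simp: layer_def intro: finite_subset[OF _ finite_layer[of "Suc n"]]\<close>)
  also have "\<dots> = (\<Sum>v\<in>?K. complex_of_real (\<Sum>x\<in>?Ch v. (w x)\<^sup>2) * (f v * cnj (g v)))"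
  proof (rule sum.cong[OF refl])
    fix v assume "v \<in> ?K"
    then have "{x\<in>{x\<in>?L. R x}. p x = v} = ?Ch v" using shifts_layer by (auto simp: layer_def)
    then show "(\<Sum>x\<in>{x\<in>{x\<in>?L. R x}. p x = v}. S f x * cnj (S g x))
        = complex_of_real (\<Sum>x\<in>?Ch v. (w x)\<^sup>2) * (f v * cnj (g v))"
      by (simp add: parent_shift_def power2_eq_square sum_distrib_left sum_distrib_right mult_ac)
  qed
  also have "\<dots> = complex_of_real ((c n)\<^sup>2) * inner_on ?K f g"
    unfolding inner_on_def sum_distrib_left
    by (intro sum.cong) (auto simp: layer_def children_weights)
  finally show ?thesis .
qed

lemma layer_norm_shift:
  "(\<Sum>x\<in>layer A la (Suc n). (cmod (S f x))\<^sup>2) = (c n)\<^sup>2 * (\<Sum>x\<in>layer A la n. (cmod (f x))\<^sup>2)"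
  using inner_on_shift[of n f f] unfolding inner_on_self of_real_mult[symmetric] of_real_eq_iff .

lemma orthonormal_fam_shift:
  assumes b: "orthonormal_fam (layer A la n) b k" and cn: "c n \<noteq> 0"
  shows "orthonormal_fam (layer A la (Suc n)) (\<lambda>i x. S (b i) x / complex_of_real (c n)) k"
  unfolding orthonormal_fam_def
proof (intro conjI allI impI)
  fix i x assume "i < k" "x \<notin> layer A la (Suc n)"
  then show "S (b i) x / complex_of_real (c n) = 0"
    using shift_support[of n "b i" x] b by (auto simp: orthonormal_fam_def)
next
  fix i j assume "i < k" "j < k"
  then show "inner_on (layer A la (Suc n)) (\<lambda>x. S (b i) x / complex_of_real (c n))
      (\<lambda>x. S (b j) x / complex_of_real (c n)) = (if i = j then 1 else 0)"
    using b cn unfolding inner_on_divide_left inner_on_divide_right inner_on_shift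
    by (simp add: orthonormal_fam_def power2_eq_square)
qed

lemma orthonormal_fam_shift_extend:
  assumes "orthonormal_fam (layer A la n) b k" "c n \<noteq> 0"
  shows "k \<le> card (layer A la (Suc n))"
    and "\<exists>b'. orthonormal_fam (layer A la (Suc n)) b' (card (layer A la (Suc n))) \<and>
      (\<forall>i<k. b' i = (\<lambda>x. S (b i) x / complex_of_real (c n)))"
proof -
  note shifted = orthonormal_fam_shift[OF assms]
  show le: "k \<le> card (layer A la (Suc n))"
    by (rule orthonormal_fam_le_card[OF finite_layer shifted])
  show "\<exists>b'. orthonormal_fam (layer A la (Suc n)) b' (card (layer A la (Suc n))) \<and>
      (\<forall>i<k. b' i = (\<lambda>x. S (b i) x / complex_of_real (c n)))"
    by (rule orthonormal_fam_extend[OF finite_layer shifted le])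
qed

lemma layer_bases_shift_compatible:
  assumes "\<And>n. c n \<noteq> 0"
  obtains \<beta> where "\<And>n. orthonormal_fam (layer A la n) (\<beta> n) (card (layer A la n))"
    and "\<And>n i. i < card (layer A la n) \<Longrightarrow> S (\<beta> n i) = (\<lambda>x. complex_of_real (c n) * \<beta> (Suc n) i x)"
proof -
  have "\<exists>\<beta>. \<forall>n. orthonormal_fam (layer A la n) (\<beta> n) (card (layer A la n)) \<and>
      (\<forall>i<card (layer A la n). \<beta> (Suc n) i = (\<lambda>x. S (\<beta> n i) x / complex_of_real (c n)))"
  proof (rule dependent_nat_choice)
    show "\<exists>b. orthonormal_fam (layer A la 0) b (card (layer A la 0))"
      using orthonormal_fam_extend[OF finite_layer orthonormal_fam_0 le0] by blast
  next
    fix b n assume "orthonormal_fam (layer A la n) b (card (layer A la n))"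
    then show "\<exists>b'. orthonormal_fam (layer A la (Suc n)) b' (card (layer A la (Suc n))) \<and>
        (\<forall>i<card (layer A la n). b' i = (\<lambda>x. S (b i) x / complex_of_real (c n)))"
      by (rule orthonormal_fam_shift_extend(2)[OF _ assms])
  qed
  then obtain \<beta> where "\<And>n. orthonormal_fam (layer A la n) (\<beta> n) (card (layer A la n))"
    and "\<And>n i. i < card (layer A la n) \<Longrightarrow> \<beta> (Suc n) i = (\<lambda>x. S (\<beta> n i) x / complex_of_real (c n))"
    by blast
  with assms show thesis by (intro that[of \<beta>]) (simp_all add: fun_eq_iff)
qed
end

section \<open>Unitary equivalence of layered shifts\<close>

definition basis_transfer ::
  "'a set \<Rightarrow> ('a \<Rightarrow> nat) \<Rightarrow> 'b set \<Rightarrow> ('b \<Rightarrow> nat) \<Rightarrow> (nat \<Rightarrow> nat \<Rightarrow> 'a \<Rightarrow> complex)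
   \<Rightarrow> (nat \<Rightarrow> nat \<Rightarrow> 'b \<Rightarrow> complex) \<Rightarrow> (nat \<Rightarrow> nat) \<Rightarrow> ('a \<Rightarrow> complex) \<Rightarrow> ('b \<Rightarrow> complex)" where
  "basis_transfer X la Y lb \<beta> \<gamma> d f = (\<lambda>y. if y \<in> Y then
      (\<Sum>i<d (lb y). inner_on (layer X la (lb y)) f (\<beta> (lb y) i) * \<gamma> (lb y) i y) else 0)"

locale layer_bases =
  fixes X :: "'a set" and la :: "'a \<Rightarrow> nat" and Y :: "'b set" and lb :: "'b \<Rightarrow> nat"
    and \<beta> :: "nat \<Rightarrow> nat \<Rightarrow> 'a \<Rightarrow> complex" and \<gamma> :: "nat \<Rightarrow> nat \<Rightarrow> 'b \<Rightarrow> complex"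
    and d :: "nat \<Rightarrow> nat"
  assumes finite_X_layer: "finite (layer X la n)" and finite_Y_layer: "finite (layer Y lb n)"
    and card_X_layer: "card (layer X la n) = d n" and card_Y_layer: "card (layer Y lb n) = d n"
    and orthonormal_X: "orthonormal_fam (layer X la n) (\<beta> n) (d n)"
    and orthonormal_Y: "orthonormal_fam (layer Y lb n) (\<gamma> n) (d n)"
begin

abbreviation "U \<equiv> basis_transfer X la Y lb \<beta> \<gamma> d"

lemma swap: "layer_bases Y lb X la \<gamma> \<beta> d"
  by unfold_locales
    (auto simp: finite_X_layer finite_Y_layer card_X_layer card_Y_layer orthonormal_X orthonormal_Y)

lemma transfer_layer:
  "y \<in> layer Y lb n \<Longrightarrow> U f y = (\<Sum>i<d n. inner_on (layer X la n) f (\<beta> n i) * \<gamma> n i y)"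
  unfolding basis_transfer_def layer_def by auto

lemma transfer_outside: "y \<notin> Y \<Longrightarrow> U f y = 0"
  unfolding basis_transfer_def by auto

lemma transfer_coeff:
  assumes "i < d n"
  shows "inner_on (layer Y lb n) (U f) (\<gamma> n i) = inner_on (layer X la n) f (\<beta> n i)"
proof -
  have "inner_on (layer Y lb n) (U f) (\<gamma> n i)
      = inner_on (layer Y lb n) (\<Sum>j<d n. (\<lambda>y. inner_on (layer X la n) f (\<beta> n j) * \<gamma> n j y)) (\<gamma> n i)"
    by (rule inner_on_cong) (simp_all add: transfer_layer sum_apply)
  then show ?thesis
    using orthonormal_fam_sum_coeff[OF orthonormal_Y order_refl assms] assms
    by (simp add: inner_on_sum_left)
qed

lemma expansion_X:
  "x \<in> layer X la n \<Longrightarrow> f x = (\<Sum>i<d n. inner_on (layer X la n) f (\<beta> n i) * \<beta> n i x)"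
  using orthonormal_fam_expansion[OF finite_X_layer, where b="\<beta> n" and x=x and f=f]
    orthonormal_X card_X_layer
  by simp

lemma expansion_Y:
  "y \<in> layer Y lb n \<Longrightarrow> g y = (\<Sum>i<d n. inner_on (layer Y lb n) g (\<gamma> n i) * \<gamma> n i y)"
  using orthonormal_fam_expansion[OF finite_Y_layer, where b="\<gamma> n" and x=y and f=g]
    orthonormal_Y card_Y_layer
  by simp

lemma layer_norm_transfer:
  "(\<Sum>y\<in>layer Y lb n. (cmod (U f y))\<^sup>2) = (\<Sum>x\<in>layer X la n. (cmod (f x))\<^sup>2)"
proof -
  define a where "a i = inner_on (layer X la n) f (\<beta> n i)" for i
  have "inner_on (layer Y lb n) (U f) (U f)
      = inner_on (layer Y lb n) (U f) (\<Sum>i<d n. (\<lambda>y. a i * \<gamma> n i y))"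
    by (rule inner_on_cong) (simp_all add: transfer_layer sum_apply a_def)
  also have "\<dots> = (\<Sum>i<d n. cnj (a i) * a i)"
    unfolding inner_on_sum_right by (simp add: transfer_coeff a_def)
  also have "\<dots> = inner_on (layer X la n) f (\<Sum>i<d n. (\<lambda>x. a i * \<beta> n i x))"
    unfolding inner_on_sum_right by (simp add: a_def)
  also have "\<dots> = inner_on (layer X la n) f f"
    by (rule inner_on_cong) (simp_all add: sum_apply a_def flip: expansion_X)
  finally show ?thesis unfolding inner_on_self of_real_eq_iff .
qed

lemma transfer_l2:
  assumes f: "f \<in> l2 X"
  shows "U f \<in> l2 Y" "l2norm Y (U f) = l2norm X f"
proof -
  let ?s = "\<Sum>\<^sub>\<infinity>x\<in>X. (cmod (f x))\<^sup>2"
  have "((\<lambda>x. (cmod (f x))\<^sup>2) has_sum ?s) X" using f by (simp add: l2_def)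
  then have "((\<lambda>n. \<Sum>x\<in>layer X la n. (cmod (f x))\<^sup>2) has_sum ?s) UNIV"
    by (subst (asm) has_sum_layers_iff[OF finite_X_layer]) auto
  then have "((\<lambda>n. \<Sum>y\<in>layer Y lb n. (cmod (U f y))\<^sup>2) has_sum ?s) UNIV"
    by (simp add: layer_norm_transfer)
  then have "((\<lambda>y. (cmod (U f y))\<^sup>2) has_sum ?s) Y"
    by (subst has_sum_layers_iff[OF finite_Y_layer]) auto
  then show "U f \<in> l2 Y" "l2norm Y (U f) = l2norm X f"
    by (auto simp: l2_def l2norm_def transfer_outside infsumI dest: has_sum_imp_summable)
qed

lemma transfer_linear: "U (\<lambda>x. k * f x + g x) = (\<lambda>y. k * U f y + U g y)"
  by (rule ext) (simp add: basis_transfer_def inner_on_linear_left distrib_right sum.distrib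
      sum_distrib_left mult.assoc)

lemma transfer_inverse:
  assumes "\<And>y. y \<notin> Y \<Longrightarrow> g y = 0"
  shows "U (basis_transfer Y lb X la \<gamma> \<beta> d g) = g"
proof
  interpret inv: layer_bases Y lb X la \<gamma> \<beta> d by (rule swap)
  fix y show "U (inv.U g) y = g y"
  proof (cases "y \<in> Y")
    case True
    then have y: "y \<in> layer Y lb (lb y)" by (simp add: layer_def)
    then have "U (inv.U g) y
        = (\<Sum>i<d (lb y). inner_on (layer Y lb (lb y)) g (\<gamma> (lb y) i) * \<gamma> (lb y) i y)"
      by (simp add: transfer_layer inv.transfer_coeff)
    also have "\<dots> = g y" by (rule expansion_Y[OF y, symmetric])
    finally show ?thesis .
  qed (simp add: assms transfer_outside)
qed

lemma unitary_transfer: "unitary_between X Y U"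
  unfolding unitary_between_def
proof (intro conjI ballI allI)
  interpret inv: layer_bases Y lb X la \<gamma> \<beta> d by (rule swap)
  show "bij_betw U (l2 X) (l2 Y)"
  proof (rule bij_betw_byWitness[where f'=inv.U])
    show "\<forall>f\<in>l2 X. inv.U (U f) = f" "\<forall>g\<in>l2 Y. U (inv.U g) = g"
      by (auto simp: l2_def intro: transfer_inverse inv.transfer_inverse)
  qed (use transfer_l2(1) inv.transfer_l2(1) in auto)
qed (simp_all add: transfer_linear transfer_l2(2))

end

locale intertwining_layer_bases = layer_bases X la Y lb \<beta> \<gamma> d
  + a: layered_shift X la RX wX pX c + b: layered_shift Y lb RY wY pY c
  for X la Y lb \<beta> \<gamma> d RX wX pX RY wY pY c +
  assumes d_mono: "d n \<le> d (Suc n)"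
    and shift_\<beta>: "i < d n \<Longrightarrow> a.S (\<beta> n i) = (\<lambda>x. complex_of_real (c n) * \<beta> (Suc n) i x)"
    and shift_\<gamma>: "i < d n \<Longrightarrow> b.S (\<gamma> n i) = (\<lambda>y. complex_of_real (c n) * \<gamma> (Suc n) i y)"
begin

lemma inner_on_shift_basis:
  assumes i: "i < d (Suc n)"
  shows "inner_on (layer X la (Suc n)) (a.S f) (\<beta> (Suc n) i)
    = (if i < d n then complex_of_real (c n) * inner_on (layer X la n) f (\<beta> n i) else 0)"
proof -
  define k where "k j = inner_on (layer X la n) f (\<beta> n j)" for j
  have "inner_on (layer X la (Suc n)) (a.S f) (\<beta> (Suc n) i)
      = inner_on (layer X la (Suc n)) (a.S (\<Sum>j<d n. (\<lambda>x. k j * \<beta> n j x))) (\<beta> (Suc n) i)"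
  proof (rule inner_on_cong[OF a.shift_local refl])
    fix y assume "y \<in> layer X la n"
    then show "f y = (\<Sum>j<d n. (\<lambda>x. k j * \<beta> n j x)) y"
      unfolding sum_apply k_def by (rule expansion_X)
  qed
  also have "\<dots> = (\<Sum>j<d n. k j * inner_on (layer X la (Suc n)) (a.S (\<beta> n j)) (\<beta> (Suc n) i))"
    by (simp only: parent_shift_sum inner_on_sum_left)
  also have "\<dots> = (\<Sum>j<d n. (k j * c n) * inner_on (layer X la (Suc n)) (\<beta> (Suc n) j) (\<beta> (Suc n) i))"
    by (intro sum.cong refl) (simp add: shift_\<beta> inner_on_scale_left)
  also have "\<dots> = (if i < d n then complex_of_real (c n) * k i else 0)"
    using orthonormal_fam_sum_coeff[OF orthonormal_X d_mono i] by (simp add: mult.commute)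
  finally show ?thesis by (simp add: k_def)
qed

lemma transfer_intertwines: "U (a.S f) = b.S (U f)"
proof
  fix y show "U (a.S f) y = b.S (U f) y"
  proof (cases "y \<in> Y")
    case y: True
    show ?thesis
    proof (cases "lb y")
      case 0
      then show ?thesis
        using y by (simp add: transfer_layer layer_iff inner_on_def a.shift_layer_0 b.shift_layer_0)
    next
      case (Suc n)
      then have y: "y \<in> layer Y lb (Suc n)" using y by (simp add: layer_def)
      define k where "k j = inner_on (layer X la n) f (\<beta> n j)" for j
      have "U (a.S f) y = (\<Sum>i<d (Suc n). if i < d n then c n * k i * \<gamma> (Suc n) i y else 0)"
        unfolding transfer_layer[OF y]
        by (intro sum.cong refl) (simp add: inner_on_shift_basis k_def)
      also have "\<dots> = (\<Sum>j<d n. k j * b.S (\<gamma> n j) y)"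
      proof -
        have "{..<d (Suc n)} \<inter> {i. i < d n} = {..<d n}" using d_mono[of n] by auto
        then show ?thesis by (simp add: sum.If_cases shift_\<gamma> mult_ac)
      qed
      also have "\<dots> = b.S (\<Sum>j<d n. (\<lambda>z. k j * \<gamma> n j z)) y"
        by (simp only: parent_shift_sum sum_apply)
      also have "\<dots> = b.S (U f) y"
        by (rule b.shift_local[OF y]) (simp add: transfer_layer sum_apply k_def mult.commute)
      finally show ?thesis .
    qed
  qed (simp add: transfer_outside b.shift_outside)
qed

end

lemma intertwining_layer_bases_exist:
  assumes "layered_shift A la RA wA pA c" "layered_shift B lb RB wB pB c"
    and c: "\<And>n. c n \<noteq> 0" and card: "\<And>n. card (layer B lb n) = card (layer A la n)"
  shows "\<exists>\<beta> \<gamma>. intertwining_layer_bases A la B lb \<beta> \<gamma> (\<lambda>n. card (layer A la n))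
    RA wA pA RB wB pB c"
proof -
  interpret a: layered_shift A la RA wA pA c by fact
  interpret b: layered_shift B lb RB wB pB c by fact
  obtain \<beta> where \<beta>: "\<And>n. orthonormal_fam (layer A la n) (\<beta> n) (card (layer A la n))"
    and shift_\<beta>: "\<And>n i. i < card (layer A la n) \<Longrightarrow>
      a.S (\<beta> n i) = (\<lambda>x. complex_of_real (c n) * \<beta> (Suc n) i x)"
    using a.layer_bases_shift_compatible[OF c] by blast
  obtain \<gamma> where \<gamma>: "\<And>n. orthonormal_fam (layer B lb n) (\<gamma> n) (card (layer A la n))"
    and shift_\<gamma>: "\<And>n i. i < card (layer A la n) \<Longrightarrow>
      b.S (\<gamma> n i) = (\<lambda>y. complex_of_real (c n) * \<gamma> (Suc n) i y)"
    using b.layer_bases_shift_compatible[OF c] unfolding card by blast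
  have "layer_bases A la B lb \<beta> \<gamma> (\<lambda>n. card (layer A la n))"
    by unfold_locales (simp_all add: a.finite_layer b.finite_layer card \<beta> \<gamma>)
  moreover have "card (layer A la n) \<le> card (layer A la (Suc n))" for n
    by (rule a.orthonormal_fam_shift_extend(1)[OF \<beta> c])
  ultimately show ?thesis using assms(1,2) shift_\<beta> shift_\<gamma>
    by (intro exI[of _ \<beta>] exI[of _ \<gamma>])
      (simp add: intertwining_layer_bases_def intertwining_layer_bases_axioms_def)
qed

theorem layered_shifts_unitarily_equivalent:
  assumes "layered_shift A la RA wA pA c" "layered_shift B lb RB wB pB c"
    and "\<And>n. c n \<noteq> 0" and "\<And>n. card (layer A la n) = card (layer B lb n)"
  shows "\<exists>U. unitary_between A B U \<and>
    (\<forall>f. U (parent_shift RA wA pA f) = parent_shift RB wB pB (U f))"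
proof -
  obtain \<beta> \<gamma> where "intertwining_layer_bases A la B lb \<beta> \<gamma> (\<lambda>n. card (layer A la n))
      RA wA pA RB wB pB c"
    using intertwining_layer_bases_exist[OF assms(1-3) assms(4)[symmetric]] by blast
  then interpret intertwining_layer_bases A la B lb \<beta> \<gamma> "\<lambda>n. card (layer A la n)"
    RA wA pA RB wB pB c .
  show ?thesis using unitary_transfer transfer_intertwines by blast
qed

section \<open>Rooted directed trees\<close>

locale rooted_tree =
  fixes V :: "'v set" and E :: "('v \<times> 'v) set"
  assumes rooted: "rooted_directed_tree V E"
begin

abbreviation "r \<equiv> root V E"
abbreviation "dp \<equiv> depth V E"

lemma edges_subset: "E \<subseteq> V \<times> V"
  using rooted by (simp add: rooted_directed_tree_def directed_tree_def)

lemma parent_unique: "(v, u) \<in> E \<Longrightarrow> (w, u) \<in> E \<Longrightarrow> v = w"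
  using rooted unfolding rooted_directed_tree_def directed_tree_def by (elim conjE) blast

lemma connected: "u \<in> V \<Longrightarrow> v \<in> V \<Longrightarrow> (u, v) \<in> (E \<union> E\<inverse>)\<^sup>*"
  using rooted by (simp add: rooted_directed_tree_def directed_tree_def)

lemma root_in: "r \<in> V" and root_no_parent: "\<not> has_parent E r"
proof -
  have "\<exists>!x. x \<in> V \<and> \<not> has_parent E x" using rooted unfolding rooted_directed_tree_def by blast
  then have "r \<in> V \<and> \<not> has_parent E r" unfolding root_def by (rule theI')
  then show "r \<in> V" "\<not> has_parent E r" by auto
qed

lemma has_parent_if_not_root: assumes "v \<in> V" "v \<noteq> r" shows "has_parent E v"
proof (rule ccontr)
  have "\<exists>!x. x \<in> V \<and> \<not> has_parent E x" using rooted unfolding rooted_directed_tree_def by blast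
  moreover assume "\<not> has_parent E v"
  ultimately show False using assms root_in root_no_parent by blast
qed

lemma no_edge_to_root: "(z, r) \<notin> E"
  using root_no_parent unfolding has_parent_def by blast

lemma parent_eqI: "(v, u) \<in> E \<Longrightarrow> parent E u = v"
  unfolding parent_def by (rule the_equality) (use parent_unique in blast)+

lemma parent_edge: "has_parent E u \<Longrightarrow> (parent E u, u) \<in> E"
  unfolding has_parent_def using parent_eqI by auto

text \<open>A walk in the underlying undirected graph that starts at the root never steps from a vertex
  to its parent, because that edge was used to reach the vertex.\<close>
lemma reachable_from_root: "(r, x) \<in> (E \<union> E\<inverse>)\<^sup>* \<Longrightarrow> (r, x) \<in> E\<^sup>*"
proof (induction rule: rtrancl_induct)
  case (step y z)
  show ?case
  proof (cases "(y, z) \<in> E")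
    case False
    then have zy: "(z, y) \<in> E" using step.hyps(2) by auto
    then have "y \<noteq> r" using no_edge_to_root by auto
    with step.IH obtain y' where "(r, y') \<in> E\<^sup>*" "(y', y) \<in> E" by (auto elim: rtranclE)
    moreover have "y' = z" using parent_unique zy calculation(2) by blast
    ultimately show ?thesis by simp
  qed (use step.IH in simp)
qed simp

lemma path_length_unique: "(r, v) \<in> E ^^ n \<Longrightarrow> (r, v) \<in> E ^^ m \<Longrightarrow> n = m"
proof (induction n arbitrary: m v)
  case 0
  then show ?case using no_edge_to_root by (cases m) auto
next
  case (Suc n)
  from Suc.prems(1) obtain z where z: "(r, z) \<in> E ^^ n" "(z, v) \<in> E" by auto
  show ?case
  proof (cases m)
    case 0
    then show ?thesis using Suc.prems(2) z(2) no_edge_to_root by simp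
  next
    case (Suc m')
    with Suc.prems(2) obtain z' where z': "(r, z') \<in> E ^^ m'" "(z', v) \<in> E" by auto
    have "z = z'" using parent_unique z(2) z'(2) by blast
    then show ?thesis using Suc.IH[OF z(1)] z'(1) Suc by simp
  qed
qed

lemma depth_eqI: "(r, v) \<in> E ^^ n \<Longrightarrow> dp v = n"
  unfolding depth_def using path_length_unique by blast

lemma depth_path: assumes "v \<in> V" shows "(r, v) \<in> E ^^ dp v"
proof -
  obtain n where "(r, v) \<in> E ^^ n"
    using reachable_from_root[OF connected[OF root_in assms]] by (auto simp: rtrancl_power)
  then show ?thesis using depth_eqI by simp
qed

lemma depth_root: "dp r = 0"
  by (rule depth_eqI) simp

lemma depth_edge: assumes "(u, v) \<in> E" shows "dp v = Suc (dp u)"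
proof (rule depth_eqI)
  show "(r, v) \<in> E ^^ Suc (dp u)" using assms depth_path[of u] edges_subset by auto
qed

lemma depth_0_imp_root: "v \<in> V \<Longrightarrow> dp v = 0 \<Longrightarrow> v = r"
  using depth_path[of v] by simp

lemma layer_0: "layer V dp 0 = {r}"
proof
  show "layer V dp 0 \<subseteq> {r}" unfolding layer_def using depth_0_imp_root by blast
  show "{r} \<subseteq> layer V dp 0" unfolding layer_def using root_in depth_root by simp
qed

lemma parent_in_layer:
  assumes "u \<in> layer V dp (Suc n)" shows "has_parent E u" "parent E u \<in> layer V dp n"
proof -
  have "u \<in> V" "u \<noteq> r" using assms depth_root by (auto simp: layer_def)
  then show hp: "has_parent E u" by (rule has_parent_if_not_root)
  show "parent E u \<in> layer V dp n"
    using assms depth_edge[OF parent_edge[OF hp]] parent_edge[OF hp] edges_subset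
    by (auto simp: layer_def)
qed

lemma layer_Suc_eq: "layer V dp (Suc n) = (\<Union>v\<in>layer V dp n. Chi E v)"
proof
  show "layer V dp (Suc n) \<subseteq> (\<Union>v\<in>layer V dp n. Chi E v)"
  proof
    fix u assume "u \<in> layer V dp (Suc n)"
    with parent_in_layer[OF this] parent_edge show "u \<in> (\<Union>v\<in>layer V dp n. Chi E v)"
      by (auto simp: Chi_def)
  qed
  show "(\<Union>v\<in>layer V dp n. Chi E v) \<subseteq> layer V dp (Suc n)"
    using depth_edge edges_subset by (auto simp: Chi_def layer_def)
qed

lemma finite_layer_depth: assumes "locally_finite V E" shows "finite (layer V dp n)"
proof (induction n)
  case (Suc n)
  have "finite (Chi E v)" if "v \<in> layer V dp n" for v
    using assms that by (simp add: locally_finite_def layer_def)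
  then show ?case unfolding layer_Suc_eq using Suc by blast
qed (simp add: layer_0)

lemma layer_nonempty: assumes "leafless V E" shows "layer V dp n \<noteq> {}"
proof (induction n)
  case (Suc n)
  then obtain v where "v \<in> layer V dp n" by blast
  moreover have "Chi E v \<noteq> {}" using assms calculation by (auto simp: leafless_def layer_def)
  ultimately show ?case by (auto simp: layer_Suc_eq)
qed (simp add: layer_0)

lemma children_eq_Chi: "v \<in> V \<Longrightarrow> {x. (x \<in> V \<and> has_parent E x) \<and> parent E x = v} = Chi E v"
  unfolding Chi_def using edges_subset parent_edge parent_eqI by (auto simp: has_parent_def)

end

section \<open>Dirichlet shifts as layered shifts\<close>

definition dirichlet_coeff :: "real \<Rightarrow> nat \<Rightarrow> real" where
  "dirichlet_coeff q n = sqrt ((real n + q) / (real n + 1))"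

lemma dirichlet_coeff_pos: "q \<ge> 1 \<Longrightarrow> dirichlet_coeff q n > 0"
  unfolding dirichlet_coeff_def by simp

lemma dirichlet_coeff_sq: "q \<ge> 1 \<Longrightarrow> (dirichlet_coeff q n)\<^sup>2 = (real n + q) / (real n + 1)"
  unfolding dirichlet_coeff_def by simp

lemma dirichlet_coeff_0: "q \<ge> 1 \<Longrightarrow> (dirichlet_coeff q 0)\<^sup>2 = q"
  by (simp add: dirichlet_coeff_sq)

lemma dirichlet_coeff_less: assumes "q > 1" "n > 0" shows "(dirichlet_coeff q n)\<^sup>2 < q"
proof -
  have "real n + q < q * (real n + 1)" using assms by (simp add: algebra_simps)
  then show ?thesis using assms by (simp add: dirichlet_coeff_sq divide_less_eq)
qed

lemma dirichlet_coeff_le: assumes "q \<ge> 1" shows "(dirichlet_coeff q n)\<^sup>2 \<le> q"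
proof -
  have "real n + q \<le> q * (real n + 1)" using assms mult_right_mono[OF assms, of "real n"]
    by (simp add: algebra_simps)
  then show ?thesis using assms by (simp add: dirichlet_coeff_sq divide_le_eq)
qed

lemma dirichlet_shift_eq_parent_shift:
  "dirichlet_shift V E q
    = parent_shift (\<lambda>u. u \<in> V \<and> has_parent E u) (dirichlet_weight V E q) (parent E)"
  unfolding dirichlet_shift_def weighted_shift_def parent_shift_def by simp

lemma (in rooted_tree) dirichlet_shift_layered:
  assumes "leafless V E" "locally_finite V E" "q \<ge> 1"
  shows "layered_shift V dp (\<lambda>u. u \<in> V \<and> has_parent E u) (dirichlet_weight V E q) (parent E)
    (dirichlet_coeff q)"
proof
  show "finite (layer V dp n)" for n by (rule finite_layer_depth[OF assms(2)])
next
  fix x assume "x \<in> V \<and> has_parent E x"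
  then show "x \<in> V \<and> parent E x \<in> V \<and> dp x = Suc (dp (parent E x))"
    using parent_edge edges_subset depth_edge by blast
next
  fix v assume v: "v \<in> V"
  have "card (Chi E v) > 0"
    using assms(1,2) v by (auto simp: leafless_def locally_finite_def card_gt_0_iff)
  moreover have "(dirichlet_weight V E q x)\<^sup>2 = (dirichlet_coeff q (dp v))\<^sup>2 / card (Chi E v)"
    if "x \<in> Chi E v" for x
    using that parent_eqI assms(3)
    by (simp add: Chi_def dirichlet_weight_def dirichlet_coeff_def power_mult_distrib power_divide)
  ultimately show "(\<Sum>x\<in>{x. (x \<in> V \<and> has_parent E x) \<and> parent E x = v}. (dirichlet_weight V E q x)\<^sup>2)
      = (dirichlet_coeff q (dp v))\<^sup>2"
    unfolding children_eq_Chi[OF v] by simp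
qed

text \<open>The \<open>m\<close> copies of the classical Dirichlet shift, the \<open>j\<close>-th one with its layers
  counted from \<open>s j\<close> on. For \<open>q = 1\<close> all weights are \<open>1\<close>, so the offsets do not matter.\<close>
definition copy_layer :: "(nat \<Rightarrow> nat) \<Rightarrow> nat \<times> nat \<Rightarrow> nat" where
  "copy_layer s = (\<lambda>(j, t). t + s j)"

definition copy_has_pred :: "nat \<Rightarrow> nat \<times> nat \<Rightarrow> bool" where
  "copy_has_pred m = (\<lambda>(j, t). j < m \<and> 0 < t)"

definition copy_pred :: "nat \<times> nat \<Rightarrow> nat \<times> nat" where
  "copy_pred = (\<lambda>(j, t). (j, t - 1))"

definition copy_weight :: "real \<Rightarrow> nat \<times> nat \<Rightarrow> real" where
  "copy_weight q = (\<lambda>(j, t). dirichlet_coeff q (t - 1))"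

lemma classical_dirichlet_sum_eq_parent_shift:
  "classical_dirichlet_sum m q = parent_shift (copy_has_pred m) (copy_weight q) copy_pred"
  unfolding classical_dirichlet_sum_def parent_shift_def copy_has_pred_def copy_weight_def
    copy_pred_def dirichlet_coeff_def
  by (auto simp: fun_eq_iff)

lemma classical_dirichlet_sum_layered:
  assumes q: "q \<ge> 1" and s: "q = 1 \<or> (\<forall>j<m. s j = 0)"
  shows "layered_shift ({..<m} \<times> UNIV) (copy_layer s) (copy_has_pred m) (copy_weight q) copy_pred
    (dirichlet_coeff q)"
proof
  show "finite (layer ({..<m} \<times> UNIV) (copy_layer s) n)" for n
    by (rule finite_subset[of _ "{..<m} \<times> {..n}"]) (auto simp: layer_def copy_layer_def)
next
  fix x assume "copy_has_pred m x"
  then show "x \<in> {..<m} \<times> UNIV \<and> copy_pred x \<in> {..<m} \<times> UNIV \<and>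
      copy_layer s x = Suc (copy_layer s (copy_pred x))"
    by (cases x) (auto simp: copy_has_pred_def copy_pred_def copy_layer_def)
next
  fix v :: "nat \<times> nat" assume "v \<in> {..<m} \<times> UNIV"
  then obtain j t where v: "v = (j, t)" "j < m" by auto
  then have "{x. copy_has_pred m x \<and> copy_pred x = v} = {(j, Suc t)}"
    by (auto simp: copy_has_pred_def copy_pred_def)
  moreover have "dirichlet_coeff q t = dirichlet_coeff q (t + s j)"
    using s v(2) by (auto simp: dirichlet_coeff_def)
  ultimately show "(\<Sum>x\<in>{x. copy_has_pred m x \<and> copy_pred x = v}. (copy_weight q x)\<^sup>2)
      = (dirichlet_coeff q (copy_layer s v))\<^sup>2"
    by (simp add: v copy_weight_def copy_layer_def)
qed

lemma card_copy_layer: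
  "card (layer ({..<m} \<times> UNIV) (copy_layer s) n) = card {j. j < m \<and> s j \<le> n}"
proof -
  have "bij_betw (\<lambda>j. (j, n - s j)) {j. j < m \<and> s j \<le> n} (layer ({..<m} \<times> UNIV) (copy_layer s) n)"
    by (rule bij_betw_byWitness[where f'=fst]) (auto simp: layer_def copy_layer_def)
  then show ?thesis by (simp add: bij_betw_same_card)
qed

lemma classical_dirichlet_sum_delta_at:
  "j < m \<Longrightarrow> classical_dirichlet_sum m q (\<lambda>y. a * delta_at (j, k) y)
    = (\<lambda>y. (a * dirichlet_coeff q k) * delta_at (j, Suc k) y)"
  by (auto simp: fun_eq_iff classical_dirichlet_sum_def delta_at_def dirichlet_coeff_def)

section \<open>Layer sizes of trees of finite branching index\<close>

text \<open>Index \<open>j\<close> appears at time \<open>LEAST k. j < d k\<close>.\<close>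
lemma mono_bounded_eq_card_started:
  fixes d :: "nat \<Rightarrow> nat"
  assumes "mono d" and bound: "\<And>n. d n \<le> d K"
  shows "d n = card {j. j < d K \<and> (LEAST k. j < d k) \<le> n}"
proof -
  have "{j. j < d K \<and> (LEAST k. j < d k) \<le> n} = {..<d n}"
  proof (intro set_eqI iffI)
    fix j assume j: "j \<in> {j. j < d K \<and> (LEAST k. j < d k) \<le> n}"
    then have "j < d K" by simp
    then have "j < d (LEAST k. j < d k)" by (rule LeastI)
    also have "\<dots> \<le> d n" using j monoD[OF \<open>mono d\<close>] by simp
    finally show "j \<in> {..<d n}" by simp
  next
    fix j assume "j \<in> {..<d n}"
    then have "j < d n" by simp
    then have "(LEAST k. j < d k) \<le> n" by (rule Least_le)
    with \<open>j < d n\<close> bound[of n] show "j \<in> {j. j < d K \<and> (LEAST k. j < d k) \<le> n}" by simp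
  qed
  then show ?thesis by simp
qed

context rooted_tree
begin

lemma finite_branching_index_bound:
  assumes "finite_branching_index V E"
  obtains K where "\<And>v. v \<in> V \<Longrightarrow> K \<le> dp v \<Longrightarrow> card (Chi E v) < 2"
proof (cases "branching_vertices V E = {}")
  case True
  then show ?thesis by (intro that[of 0]) (auto simp: branching_vertices_def)
next
  case False
  then obtain K where K: "(SUP w\<in>branching_vertices V E. enat (dp w)) = enat K"
    using assms by (cases "SUP w\<in>branching_vertices V E. enat (dp w)")
      (simp_all add: finite_branching_index_def branching_index_def)
  have "dp w \<le> K" if "w \<in> branching_vertices V E" for w
    using SUP_upper[OF that, of "\<lambda>w. enat (dp w)"] K by simp
  then show ?thesis by (intro that[of "Suc K"]) (force simp: branching_vertices_def)
qed

lemma card_layer_mono: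
  assumes "leafless V E" "locally_finite V E"
  shows "mono (\<lambda>n. card (layer V dp n))"
proof (rule incseq_SucI)
  fix n
  have "layer V dp n \<subseteq> parent E ` layer V dp (Suc n)"
  proof
    fix v assume v: "v \<in> layer V dp n"
    then obtain u where "(v, u) \<in> E"
      using assms(1) by (auto simp: leafless_def layer_def Chi_def)
    then have "u \<in> layer V dp (Suc n)" "v = parent E u"
      using v parent_eqI depth_edge edges_subset by (auto simp: layer_def)
    then show "v \<in> parent E ` layer V dp (Suc n)" by (rule rev_image_eqI)
  qed
  then show "card (layer V dp n) \<le> card (layer V dp (Suc n))"
    by (meson card_image_le card_mono finite_imageI finite_layer_depth[OF assms(2)] order_trans)
qed

lemma card_layer_Suc_le:
  assumes "locally_finite V E" and "\<And>v. v \<in> layer V dp n \<Longrightarrow> card (Chi E v) < 2"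
  shows "card (layer V dp (Suc n)) \<le> card (layer V dp n)"
proof -
  have "card (layer V dp (Suc n)) \<le> (\<Sum>v\<in>layer V dp n. card (Chi E v))"
    unfolding layer_Suc_eq by (rule card_UN_le[OF finite_layer_depth[OF assms(1)]])
  also have "\<dots> \<le> (\<Sum>v\<in>layer V dp n. 1)"
    using assms(2) by (intro sum_mono) fastforce
  finally show ?thesis by simp
qed

lemma card_layer_eq_card_started:
  assumes "leafless V E" "locally_finite V E" "finite_branching_index V E"
  obtains m s where "\<And>n. card (layer V dp n) = card {j::nat. j < m \<and> s j \<le> n}"
proof -
  define d where "d = (\<lambda>n. card (layer V dp n))"
  have "mono d" using card_layer_mono[OF assms(1,2)] unfolding d_def .
  obtain K where K: "\<And>v. v \<in> V \<Longrightarrow> K \<le> dp v \<Longrightarrow> card (Chi E v) < 2"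
    using finite_branching_index_bound[OF assms(3)] by blast
  have eventually_const: "d n = d K" if "K \<le> n" for n
    using that
  proof (induction n rule: dec_induct)
    case (step n)
    have "card (Chi E v) < 2" if "v \<in> layer V dp n" for v
      using K that step.hyps by (simp add: layer_def)
    then have "d (Suc n) \<le> d n" unfolding d_def by (rule card_layer_Suc_le[OF assms(2)])
    moreover have "d n \<le> d (Suc n)" using monoD[OF \<open>mono d\<close>] by simp
    ultimately show ?case using step.IH by simp
  qed simp
  have bound: "d n \<le> d K" for n
  proof (cases "n \<le> K")
    case True
    then show ?thesis using monoD[OF \<open>mono d\<close>] by blast
  next
    case False
    then have "d n = d K" by (intro eventually_const) simp
    then show ?thesis by simp
  qed
  show ?thesis
  proof (rule that)
    fix n
    have "card (layer V dp n) = d n" by (simp add: d_def)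
    also have "\<dots> = card {j. j < d K \<and> (LEAST k. j < d k) \<le> n}"
      by (rule mono_bounded_eq_card_started[OF \<open>mono d\<close> bound])
    finally show "card (layer V dp n) = card {j. j < d K \<and> (LEAST k. j < d k) \<le> n}" .
  qed
qed

lemma card_layer_iso_to_nat:
  assumes "iso_to_nat V E"
  shows "card (layer V dp n) = 1"
proof -
  obtain f where bij: "bij_betw f V (UNIV :: nat set)"
    and edge: "\<And>u v. u \<in> V \<Longrightarrow> v \<in> V \<Longrightarrow> (u, v) \<in> E \<longleftrightarrow> f v = f u + 1"
    using assms unfolding iso_to_nat_def by blast
  have f_root: "f r = 0"
  proof (rule ccontr)
    assume "f r \<noteq> 0"
    then obtain u where u: "u \<in> V" "Suc (f u) = f r"
      using bij by (metis UNIV_I bij_betw_iff_bijections not0_implies_Suc)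
    then have "(u, r) \<in> E" using edge[OF u(1) root_in] by simp
    with no_edge_to_root show False by blast
  qed
  have f_depth: "f v = n" if "(r, v) \<in> E ^^ n" for v n
    using that
  proof (induction n arbitrary: v)
    case (Suc n)
    then obtain z where "(r, z) \<in> E ^^ n" "(z, v) \<in> E" by auto
    with Suc.IH edge edges_subset show ?case by fastforce
  qed (simp add: f_root)
  obtain v0 where v0: "v0 \<in> V" "f v0 = n" using bij by (metis UNIV_I bij_betw_iff_bijections)
  have "layer V dp n = {v0}"
  proof (intro set_eqI iffI)
    fix v assume "v \<in> layer V dp n"
    then have "v \<in> V" "f v = f v0" using f_depth[OF depth_path] v0 by (auto simp: layer_def)
    then show "v \<in> {v0}" using bij v0(1) by (auto simp: bij_betw_def inj_on_def)
  next
    fix v assume "v \<in> {v0}"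
    then show "v \<in> layer V dp n" using f_depth[OF depth_path[OF v0(1)]] v0 by (simp add: layer_def)
  qed
  then show ?thesis by simp
qed

lemma iso_to_nat_if_layers_singletons:
  assumes single: "\<And>n x y. x \<in> layer V dp n \<Longrightarrow> y \<in> layer V dp n \<Longrightarrow> x = y"
    and nonempty: "\<And>n. layer V dp n \<noteq> {}"
  shows "iso_to_nat V E"
  unfolding iso_to_nat_def
proof (intro exI[of _ dp] conjI ballI)
  show "bij_betw dp V UNIV"
    unfolding bij_betw_def
  proof
    show "inj_on dp V" using single by (auto simp: inj_on_def layer_def)
    show "dp ` V = UNIV"
    proof (intro set_eqI iffI)
      fix n :: nat
      obtain x where "x \<in> layer V dp n" using nonempty[of n] by blast
      then show "n \<in> dp ` V" by (auto simp: layer_def)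
    qed simp
  qed
next
  fix u v assume u: "u \<in> V" and v: "v \<in> V"
  show "(u, v) \<in> E \<longleftrightarrow> dp v = dp u + 1"
  proof
    assume "(u, v) \<in> E" then show "dp v = dp u + 1" using depth_edge by simp
  next
    assume "dp v = dp u + 1"
    then have "v \<in> layer V dp (Suc (dp u))" using v by (simp add: layer_def)
    from parent_in_layer[OF this] parent_edge have "(parent E v, v) \<in> E" "parent E v = u"
      using single[of _ "dp u" u] u by (auto simp: layer_def)
    then show "(u, v) \<in> E" by simp
  qed
qed

end

theorem dirichlet_shift_equivalent_if_q_1_or_iso_to_nat:
  assumes T: "rooted_directed_tree V E" and lf: "leafless V E" and fin: "locally_finite V E"
    and fbi: "finite_branching_index V E" and q: "q \<ge> 1" and h: "q = 1 \<or> iso_to_nat V E"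
  shows "\<exists>m::nat. unitarily_equivalent V (dirichlet_shift V E q)
    ({..<m} \<times> (UNIV :: nat set)) (classical_dirichlet_sum m q)"
proof -
  interpret rooted_tree V E by (rule rooted_tree.intro[OF T])
  obtain m :: nat and s :: "nat \<Rightarrow> nat"
    where card: "\<And>n. card (layer V dp n) = card {j. j < m \<and> s j \<le> n}"
      and s: "q = 1 \<or> (\<forall>j<m. s j = 0)"
  proof (cases "q = 1")
    case True
    then show ?thesis using card_layer_eq_card_started[OF lf fin fbi] that by blast
  next
    case False
    then show ?thesis using h card_layer_iso_to_nat that[of 1 "\<lambda>_. 0"] by simp
  qed
  have "\<exists>U. unitary_between V ({..<m} \<times> UNIV) U \<and> (\<forall>f. U (dirichlet_shift V E q f)
      = classical_dirichlet_sum m q (U f))"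
    unfolding dirichlet_shift_eq_parent_shift classical_dirichlet_sum_eq_parent_shift
    by (rule layered_shifts_unitarily_equivalent[OF dirichlet_shift_layered[OF lf fin q]
          classical_dirichlet_sum_layered[OF q s]])
      (use dirichlet_coeff_pos[OF q] card card_copy_layer in \<open>simp_all add: less_le\<close>)
  then show ?thesis unfolding unitarily_equivalent_def by blast
qed

section \<open>Linear isometries preserve finite inner products\<close>

definition sqnorm :: "'a set \<Rightarrow> ('a \<Rightarrow> complex) \<Rightarrow> real" where
  "sqnorm A f = (\<Sum>\<^sub>\<infinity>x\<in>A. (cmod (f x))\<^sup>2)"

lemma sqnorm_eq_if_l2norm_eq: "l2norm B g = l2norm A f \<Longrightarrow> sqnorm B g = sqnorm A f"
  unfolding l2norm_def sqnorm_def by (simp add: infsum_nonneg)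

lemma sqnorm_finite_support:
  assumes "finite F" "F \<subseteq> A" "\<And>x. x \<notin> F \<Longrightarrow> h x = 0"
  shows "h \<in> l2 A" "sqnorm A h = (\<Sum>x\<in>F. (cmod (h x))\<^sup>2)"
proof -
  have "((\<lambda>x. (cmod (h x))\<^sup>2) has_sum (\<Sum>x\<in>F. (cmod (h x))\<^sup>2)) A"
    by (rule has_sum_finite_neutralI) (use assms in auto)
  then show "h \<in> l2 A" "sqnorm A h = (\<Sum>x\<in>F. (cmod (h x))\<^sup>2)"
    using assms by (auto simp: l2_def sqnorm_def infsumI dest: has_sum_imp_summable)
qed

lemma sqnorm_add_finite_support:
  assumes f: "f \<in> l2 A" and F: "finite F" "F \<subseteq> A" and h: "\<And>x. x \<notin> F \<Longrightarrow> h x = 0"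
  shows "(\<lambda>x. f x + h x) \<in> l2 A"
    and "sqnorm A (\<lambda>x. f x + h x) = sqnorm A f + (\<Sum>x\<in>F. (cmod (f x + h x))\<^sup>2 - (cmod (f x))\<^sup>2)"
proof -
  let ?D = "\<lambda>x. if x \<in> F then (cmod (f x + h x))\<^sup>2 - (cmod (f x))\<^sup>2 else 0"
  have "(?D has_sum (\<Sum>x\<in>F. (cmod (f x + h x))\<^sup>2 - (cmod (f x))\<^sup>2)) A"
    by (rule has_sum_finite_neutralI) (use F in auto)
  moreover have "((\<lambda>x. (cmod (f x))\<^sup>2) has_sum sqnorm A f) A"
    using f by (simp add: l2_def sqnorm_def)
  ultimately have "((\<lambda>x. (cmod (f x))\<^sup>2 + ?D x) has_sum
      (sqnorm A f + (\<Sum>x\<in>F. (cmod (f x + h x))\<^sup>2 - (cmod (f x))\<^sup>2))) A"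
    by (intro has_sum_add)
  moreover have "(\<lambda>x. (cmod (f x))\<^sup>2 + ?D x) = (\<lambda>x. (cmod (f x + h x))\<^sup>2)"
    by (auto simp: fun_eq_iff h)
  ultimately have "((\<lambda>x. (cmod (f x + h x))\<^sup>2) has_sum
      (sqnorm A f + (\<Sum>x\<in>F. (cmod (f x + h x))\<^sup>2 - (cmod (f x))\<^sup>2))) A"
    by simp
  then show "(\<lambda>x. f x + h x) \<in> l2 A"
    and "sqnorm A (\<lambda>x. f x + h x) = sqnorm A f + (\<Sum>x\<in>F. (cmod (f x + h x))\<^sup>2 - (cmod (f x))\<^sup>2)"
    using f F h by (auto simp: l2_def sqnorm_def infsumI dest: has_sum_imp_summable)
qed

lemma cmod_add_power2: "(cmod (a + b))\<^sup>2 = (cmod a)\<^sup>2 + (cmod b)\<^sup>2 + 2 * Re (a * cnj b)"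
  unfolding cmod_power2 by (simp add: power2_eq_square algebra_simps)

text \<open>Polarization: the norm of \<open>f + t g\<close> for a finitely supported \<open>g\<close> determines
  \<open>Re (cnj t * inner_on F f g)\<close>.\<close>
lemma sqnorm_add_scaled:
  assumes f: "f \<in> l2 A" and F: "finite F" "F \<subseteq> A" and g: "\<And>x. x \<notin> F \<Longrightarrow> g x = 0"
  shows "(\<lambda>x. t * g x + f x) \<in> l2 A"
    and "sqnorm A (\<lambda>x. t * g x + f x)
      = sqnorm A f + (cmod t)\<^sup>2 * sqnorm A g + 2 * Re (cnj t * inner_on F f g)"
proof -
  have tg: "\<And>x. x \<notin> F \<Longrightarrow> t * g x = 0" using g by simp
  show "(\<lambda>x. t * g x + f x) \<in> l2 A"
    using sqnorm_add_finite_support(1)[OF f F tg] by (simp add: add.commute)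
  have pointwise: "(cmod (f x + t * g x))\<^sup>2 - (cmod (f x))\<^sup>2
      = (cmod t)\<^sup>2 * (cmod (g x))\<^sup>2 + 2 * Re (cnj t * (f x * cnj (g x)))" for x
    by (simp add: cmod_add_power2 norm_mult power_mult_distrib mult_ac)
  have "(\<Sum>x\<in>F. (cmod (f x + t * g x))\<^sup>2 - (cmod (f x))\<^sup>2)
      = (\<Sum>x\<in>F. (cmod t)\<^sup>2 * (cmod (g x))\<^sup>2 + 2 * Re (cnj t * (f x * cnj (g x))))"
    by (rule sum.cong[OF refl pointwise])
  also have "\<dots> = (cmod t)\<^sup>2 * (\<Sum>x\<in>F. (cmod (g x))\<^sup>2) + 2 * Re (cnj t * inner_on F f g)"
    by (simp only: sum.distrib sum_distrib_left Re_sum inner_on_def)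
  finally have "(\<Sum>x\<in>F. (cmod (f x + t * g x))\<^sup>2 - (cmod (f x))\<^sup>2)
      = (cmod t)\<^sup>2 * (\<Sum>x\<in>F. (cmod (g x))\<^sup>2) + 2 * Re (cnj t * inner_on F f g)" .
  then show "sqnorm A (\<lambda>x. t * g x + f x)
      = sqnorm A f + (cmod t)\<^sup>2 * sqnorm A g + 2 * Re (cnj t * inner_on F f g)"
    using sqnorm_add_finite_support(2)[OF f F tg] sqnorm_finite_support(2)[OF F g]
    by (simp add: add.commute)
qed

lemma unitary_betweenD:
  assumes "unitary_between A B U"
  shows unitary_between_bij: "bij_betw U (l2 A) (l2 B)"
    and unitary_between_linear: "\<And>f g c. f \<in> l2 A \<Longrightarrow> g \<in> l2 A \<Longrightarrow>
      U (\<lambda>x. c * f x + g x) = (\<lambda>y. c * U f y + U g y)"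
    and unitary_between_l2norm: "\<And>f. f \<in> l2 A \<Longrightarrow> l2norm B (U f) = l2norm A f"
  using assms unfolding unitary_between_def by blast+

lemma unitary_between_l2:
  assumes "unitary_between A B U" "f \<in> l2 A" shows "U f \<in> l2 B"
  by (rule bij_betw_apply[OF unitary_between_bij[OF assms(1)] assms(2)])

lemma unitary_between_sqnorm:
  assumes "unitary_between A B U" "f \<in> l2 A" shows "sqnorm B (U f) = sqnorm A f"
  by (rule sqnorm_eq_if_l2norm_eq[OF unitary_between_l2norm[OF assms]])

lemma unitary_between_scale:
  assumes U: "unitary_between A B U" and f: "f \<in> l2 A"
  shows "U (\<lambda>x. c * f x) = (\<lambda>y. c * U f y)"
proof -
  have z: "(\<lambda>_. 0) \<in> l2 A" by (rule sqnorm_finite_support(1)[of "{}"]) auto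
  have "U (\<lambda>_. 0) = (\<lambda>y. - 1 * U (\<lambda>_. 0) y + U (\<lambda>_. 0) y)"
    using unitary_between_linear[OF U z z, of "- 1"] by simp
  then have "U (\<lambda>_. 0) = (\<lambda>_. 0)" by simp
  then show ?thesis using unitary_between_linear[OF U f z, of c] by simp
qed

lemma delta_at_l2: "x \<in> A \<Longrightarrow> delta_at x \<in> l2 A"
  by (rule sqnorm_finite_support(1)[of "{x}"]) (auto simp: delta_at_def)

lemma sqnorm_delta_at: "x \<in> A \<Longrightarrow> sqnorm A (\<lambda>y. a * delta_at x y) = (cmod a)\<^sup>2"
  using sqnorm_finite_support(2)[of "{x}" A "\<lambda>y. a * delta_at x y"] by (simp add: delta_at_def)

lemma unitary_between_inner_on:
  assumes U: "unitary_between A B U" and f: "f \<in> l2 A"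
    and F: "finite F" "F \<subseteq> A" "\<And>x. x \<notin> F \<Longrightarrow> g x = 0"
    and G: "finite G" "G \<subseteq> B" "\<And>y. y \<notin> G \<Longrightarrow> U g y = 0"
  shows "inner_on G (U f) (U g) = inner_on F f g"
proof -
  have g: "g \<in> l2 A" using sqnorm_finite_support(1)[OF F] .
  have Re_eq: "Re (cnj t * inner_on G (U f) (U g)) = Re (cnj t * inner_on F f g)" for t
  proof -
    have tgf: "(\<lambda>x. t * g x + f x) \<in> l2 A" using f F by (rule sqnorm_add_scaled(1))
    have "sqnorm A f + (cmod t)\<^sup>2 * sqnorm A g + 2 * Re (cnj t * inner_on G (U f) (U g))
        = sqnorm B (\<lambda>y. t * U g y + U f y)"
      using sqnorm_add_scaled(2)[OF unitary_between_l2[OF U f] G]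
      by (simp add: unitary_between_sqnorm[OF U f] unitary_between_sqnorm[OF U g])
    also have "\<dots> = sqnorm B (U (\<lambda>x. t * g x + f x))"
      by (simp only: unitary_between_linear[OF U g f])
    also have "\<dots> = sqnorm A (\<lambda>x. t * g x + f x)"
      by (rule unitary_between_sqnorm[OF U tgf])
    also have "\<dots> = sqnorm A f + (cmod t)\<^sup>2 * sqnorm A g + 2 * Re (cnj t * inner_on F f g)"
      using f F by (rule sqnorm_add_scaled(2))
    finally show ?thesis by simp
  qed
  show ?thesis
  proof (rule complex_eqI)
    show "Re (inner_on G (U f) (U g)) = Re (inner_on F f g)" using Re_eq[of 1] by simp
    show "Im (inner_on G (U f) (U g)) = Im (inner_on F f g)" using Re_eq[of \<i>] by simp
  qed
qed

section \<open>Norms of layered shifts\<close>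

definition layer_sqnorm :: "'a set \<Rightarrow> ('a \<Rightarrow> nat) \<Rightarrow> ('a \<Rightarrow> complex) \<Rightarrow> nat \<Rightarrow> real" where
  "layer_sqnorm A la f n = (\<Sum>x\<in>layer A la n. (cmod (f x))\<^sup>2)"

lemma layer_sqnorm_nonneg: "layer_sqnorm A la f n \<ge> 0"
  unfolding layer_sqnorm_def by (rule sum_nonneg) simp

context layered_shift
begin

lemma has_sum_layer_sqnorm:
  assumes "f \<in> l2 A" shows "(layer_sqnorm A la f has_sum sqnorm A f) UNIV"
proof -
  have "((\<lambda>x. (cmod (f x))\<^sup>2) has_sum sqnorm A f) A" using assms by (simp add: l2_def sqnorm_def)
  then show ?thesis
    unfolding layer_sqnorm_def[abs_def] by (subst (asm) has_sum_layers_iff[OF finite_layer]) auto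
qed

lemma layer_sqnorm_shift_0: "layer_sqnorm A la (S f) 0 = 0"
  unfolding layer_sqnorm_def by (rule sum.neutral) (simp add: layer_def shift_layer_0)

lemma layer_sqnorm_shift_Suc: "layer_sqnorm A la (S f) (Suc n) = (c n)\<^sup>2 * layer_sqnorm A la f n"
  unfolding layer_sqnorm_def by (rule layer_norm_shift)

lemma shift_l2:
  assumes f: "f \<in> l2 A" and C: "\<And>n. (c n)\<^sup>2 \<le> C"
  shows "S f \<in> l2 A" and "((\<lambda>n. (c n)\<^sup>2 * layer_sqnorm A la f n) has_sum sqnorm A (S f)) UNIV"
proof -
  let ?a = "\<lambda>n. (c n)\<^sup>2 * layer_sqnorm A la f n"
  have "?a summable_on UNIV"
  proof (rule summable_on_comparison_test)
    show "(\<lambda>n. C * layer_sqnorm A la f n) summable_on UNIV"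
      using has_sum_layer_sqnorm[OF f]
      by (intro summable_on_cmult_right) (rule has_sum_imp_summable)
  qed (simp_all add: layer_sqnorm_nonneg mult_right_mono C)
  then have "(?a has_sum infsum ?a UNIV) UNIV" by (rule has_sum_infsum)
  then have "((layer_sqnorm A la (S f) \<circ> Suc) has_sum infsum ?a UNIV) UNIV"
    by (simp add: o_def layer_sqnorm_shift_Suc)
  then have "(layer_sqnorm A la (S f) has_sum infsum ?a UNIV) (range Suc)"
    by (subst has_sum_reindex) auto
  then have "(layer_sqnorm A la (S f) has_sum infsum ?a UNIV) UNIV"
    by (rule has_sum_cong_neutral[THEN iffD1, rotated -1])
      (auto simp: image_iff, metis layer_sqnorm_shift_0 not0_implies_Suc)
  then have S: "((\<lambda>x. (cmod (S f x))\<^sup>2) has_sum infsum ?a UNIV) A"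
    unfolding layer_sqnorm_def[abs_def] by (subst has_sum_layers_iff[OF finite_layer]) auto
  then show "S f \<in> l2 A"
    by (auto simp: l2_def shift_outside dest: has_sum_imp_summable)
  from S have "sqnorm A (S f) = infsum ?a UNIV" by (simp add: sqnorm_def infsumI)
  with \<open>?a summable_on UNIV\<close> show "(?a has_sum sqnorm A (S f)) UNIV" by simp
qed

lemma vanishes_off_layer_0_if_maximal_stretch:
  assumes f: "f \<in> l2 A" and c0: "(c 0)\<^sup>2 = q" and cn: "\<And>n. n > 0 \<Longrightarrow> (c n)\<^sup>2 < q"
    and stretch: "sqnorm A (S f) = q * sqnorm A f"
    and x: "x \<in> A" "la x \<noteq> 0"
  shows "f x = 0"
proof -
  have C: "(c n)\<^sup>2 \<le> q" for n using c0 cn[of n] by (cases n) auto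
  have "((\<lambda>n. q * layer_sqnorm A la f n + - ((c n)\<^sup>2 * layer_sqnorm A la f n)) has_sum
      (q * sqnorm A f + - sqnorm A (S f))) UNIV"
    using shift_l2(2)[OF f C]
    by (intro has_sum_add has_sum_cmult_right has_sum_layer_sqnorm f has_sum_uminus[THEN iffD2])
      simp
  then have "((\<lambda>n. (q - (c n)\<^sup>2) * layer_sqnorm A la f n) has_sum 0) UNIV"
    using stretch by (simp add: algebra_simps)
  then have "(q - (c (la x))\<^sup>2) * layer_sqnorm A la f (la x) = 0"
    by (rule nonneg_has_sum_le_0D) (simp_all add: C layer_sqnorm_nonneg)
  with cn[of "la x"] x(2) have "layer_sqnorm A la f (la x) = 0" by simp
  then have "\<forall>y\<in>layer A la (la x). (cmod (f y))\<^sup>2 = 0"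
    unfolding layer_sqnorm_def by (subst sum_nonneg_eq_0_iff[symmetric]) (auto simp: finite_layer)
  then show "f x = 0" using x by (auto simp: layer_def)
qed

end

section \<open>The case \<open>q > 1\<close>\<close>

locale dirichlet_equivalence = rooted_tree V E
  for V :: "'v set" and E +
  fixes q :: real and m :: nat and U :: "('v \<Rightarrow> complex) \<Rightarrow> (nat \<times> nat \<Rightarrow> complex)"
  assumes leafless: "leafless V E" and locally_finite: "locally_finite V E" and q: "q > 1"
    and unitary: "unitary_between V ({..<m} \<times> UNIV) U"
    and intertwines: "f \<in> l2 V \<Longrightarrow> U (dirichlet_shift V E q f) = classical_dirichlet_sum m q (U f)"
begin

abbreviation "D \<equiv> ({..<m} \<times> UNIV) :: (nat \<times> nat) set"
abbreviation "S \<equiv> dirichlet_shift V E q"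
abbreviation "T \<equiv> classical_dirichlet_sum m q"

sublocale src: layered_shift V dp "\<lambda>u. u \<in> V \<and> has_parent E u" "dirichlet_weight V E q" "parent E"
  "dirichlet_coeff q"
  using dirichlet_shift_layered[OF leafless locally_finite] q by simp

lemma S_eq: "S = src.S"
  by (rule dirichlet_shift_eq_parent_shift)

lemma S_l2: "f \<in> l2 V \<Longrightarrow> S f \<in> l2 V"
  unfolding S_eq using q by (intro src.shift_l2(1)[of _ q] dirichlet_coeff_le) simp_all

lemma sqnorm_S:
  assumes "f \<in> l2 V" shows "sqnorm V (S f) = sqnorm D (T (U f))"
  using unitary_between_sqnorm[OF unitary S_l2[OF assms]] intertwines[OF assms] by simp

lemma layer_0_basis_preimage:
  assumes j: "j < m" shows "\<exists>a. delta_at (j, 0) = (\<lambda>y. a * U (delta_at r) y)"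
proof -
  have "delta_at (j, 0) \<in> U ` l2 V"
    using unitary_between_bij[OF unitary] delta_at_l2[of "(j, 0)" D] j by (simp add: bij_betw_def)
  then obtain f where f: "f \<in> l2 V" and Uf: "U f = (\<lambda>y. 1 * delta_at (j, 0) y)" by auto
  have "sqnorm V (S f) = sqnorm D (\<lambda>y. dirichlet_coeff q 0 * delta_at (j, 1) y)"
    unfolding sqnorm_S[OF f] Uf classical_dirichlet_sum_delta_at[OF j] by simp
  also have "\<dots> = q * sqnorm D (U f)"
    using j q sqnorm_delta_at[of "(j, 0)" D 1] by (simp add: Uf sqnorm_delta_at dirichlet_coeff_0)
  also have "\<dots> = q * sqnorm V f" by (simp add: unitary_between_sqnorm[OF unitary f])
  finally have stretch: "sqnorm V (src.S f) = q * sqnorm V f" by (simp add: S_eq)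
  define a where "a = f r"
  have "f x = a * delta_at r x" for x
  proof (cases "x = r")
    case False
    have "f x = 0"
    proof (cases "x \<in> V")
      case True
      with False have "dp x \<noteq> 0" using depth_0_imp_root by blast
      with True show ?thesis
        using q by (intro src.vanishes_off_layer_0_if_maximal_stretch[OF f dirichlet_coeff_0
            dirichlet_coeff_less[OF q] stretch]) simp_all
    qed (use f in \<open>simp add: l2_def\<close>)
    with False show ?thesis by (simp add: delta_at_def)
  qed (simp add: delta_at_def a_def)
  then have "f = (\<lambda>x. a * delta_at r x)" ..
  then have "U f = (\<lambda>y. a * U (delta_at r) y)"
    using unitary_between_scale[OF unitary delta_at_l2[OF root_in]] by simp
  with Uf show ?thesis by (intro exI[of _ a]) simp
qed

lemma sqnorm_U_delta_at: "x \<in> V \<Longrightarrow> sqnorm D (U (delta_at x)) = 1"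
  using unitary_between_sqnorm[OF unitary delta_at_l2] sqnorm_delta_at[of x V 1] by simp

lemma single_copy: "m = 1"
proof (rule ccontr)
  assume "m \<noteq> 1"
  moreover have "m \<noteq> 0"
  proof
    assume "m = 0"
    then have "U (delta_at r) = (\<lambda>_. 0)"
      using unitary_between_l2[OF unitary delta_at_l2[OF root_in]] by (auto simp: l2_def)
    then show False using sqnorm_U_delta_at[OF root_in] by (simp add: sqnorm_def)
  qed
  ultimately have "0 < m" "1 < m" by simp_all
  obtain a0 where a0: "delta_at (0, 0) = (\<lambda>y. a0 * U (delta_at r) y)"
    using layer_0_basis_preimage[OF \<open>0 < m\<close>] by blast
  obtain a1 where a1: "delta_at (1, 0) = (\<lambda>y. a1 * U (delta_at r) y)"
    using layer_0_basis_preimage[OF \<open>1 < m\<close>] by blast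
  have "U (delta_at r) (0, 0) \<noteq> 0" using fun_cong[OF a0, of "(0, 0)"] by (auto simp: delta_at_def)
  then have "a1 = 0" using fun_cong[OF a1, of "(0, 0)"] by (simp add: delta_at_def)
  then show False using fun_cong[OF a1, of "(1, 0)"] by (simp add: delta_at_def)
qed

lemma U_root: "\<exists>\<alpha>. \<alpha> \<noteq> 0 \<and> U (delta_at r) = (\<lambda>y. \<alpha> * delta_at (0, 0) y)"
proof -
  obtain a where a: "delta_at (0, 0) = (\<lambda>y. a * U (delta_at r) y)"
    using layer_0_basis_preimage[of 0] single_copy by auto
  have "a \<noteq> 0"
  proof
    assume "a = 0"
    then show False using fun_cong[OF a, of "(0, 0)"] by (simp add: delta_at_def)
  qed
  with a show ?thesis by (intro exI[of _ "1 / a"]) (simp add: fun_eq_iff)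
qed

definition orbit :: "nat \<Rightarrow> 'v \<Rightarrow> complex" where
  "orbit k = (S ^^ k) (delta_at r)"

lemma orbit_l2: "orbit k \<in> l2 V"
  by (induction k) (simp_all add: orbit_def delta_at_l2 root_in S_l2)

lemma orbit_support: "x \<notin> layer V dp k \<Longrightarrow> orbit k x = 0"
proof (induction k arbitrary: x)
  case 0
  then show ?case by (simp add: orbit_def delta_at_def layer_0)
next
  case (Suc k)
  then show ?case
    using src.shift_support[of k "orbit k" x] by (simp add: orbit_def S_eq)
qed

lemma U_orbit: "\<exists>\<beta>. \<beta> \<noteq> 0 \<and> U (orbit k) = (\<lambda>y. \<beta> * delta_at (0, k) y)"
proof (induction k)
  case 0
  show ?case unfolding orbit_def funpow_0 by (rule U_root)
next
  case (Suc k)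
  then obtain \<beta> where "\<beta> \<noteq> 0" and U_k: "U (orbit k) = (\<lambda>y. \<beta> * delta_at (0, k) y)" by blast
  have "U (orbit (Suc k)) = T (U (orbit k))"
    unfolding orbit_def funpow.simps o_apply by (rule intertwines[OF orbit_l2[unfolded orbit_def]])
  also have "\<dots> = (\<lambda>y. (\<beta> * dirichlet_coeff q k) * delta_at (0, Suc k) y)"
    unfolding U_k using single_copy by (simp add: classical_dirichlet_sum_delta_at)
  finally have "U (orbit (Suc k)) = (\<lambda>y. (\<beta> * dirichlet_coeff q k) * delta_at (0, Suc k) y)" .
  moreover have "\<beta> * dirichlet_coeff q k \<noteq> 0" using \<open>\<beta> \<noteq> 0\<close> dirichlet_coeff_pos[of q k] q by simp
  ultimately show ?case by blast
qed

text \<open>\<open>U\<close> preserves the inner products of \<open>delta_at x\<close> with the orbit vectors, so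
  \<open>U (delta_at x)\<close> is orthogonal to all basis vectors but the one of its layer.\<close>
lemma U_delta_at_layer:
  assumes x: "x \<in> layer V dp n"
  shows "U (delta_at x) = (\<lambda>y. U (delta_at x) (0, n) * delta_at (0, n) y)"
proof
  fix y
  show "U (delta_at x) y = U (delta_at x) (0, n) * delta_at (0, n) y"
  proof (cases "y \<in> D")
    case False
    have "x \<in> V" using x by (simp add: layer_def)
    then have "U (delta_at x) y = 0"
      using unitary_between_l2[OF unitary delta_at_l2[of x V]] False by (cases y) (simp add: l2_def)
    moreover have "y \<noteq> (0, n)" using single_copy False by auto
    ultimately show ?thesis by (simp add: delta_at_def)
  next
    case True
    then obtain k where y: "y = (0, k)" using single_copy by auto
    show ?thesis
    proof (cases "k = n")
      case False
      obtain \<beta> where \<beta>: "\<beta> \<noteq> 0" "U (orbit k) = (\<lambda>y. \<beta> * delta_at (0, k) y)" using U_orbit by blast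
      have "inner_on {(0, k)} (U (delta_at x)) (U (orbit k))
          = inner_on (layer V dp k) (delta_at x) (orbit k)"
        using single_copy x
        by (intro unitary_between_inner_on[OF unitary delta_at_l2])
          (use single_copy x src.finite_layer orbit_support in
            \<open>auto simp: \<beta>(2) delta_at_def layer_iff\<close>)
      also have "\<dots> = 0"
        using x False by (auto simp: inner_on_def delta_at_def layer_def intro: sum.neutral)
      finally show ?thesis using \<beta> y False by (simp add: inner_on_def \<beta>(2) delta_at_def)
    qed (simp add: y delta_at_def)
  qed
qed

lemma layer_subsingleton:
  assumes x1: "x1 \<in> layer V dp n" and x2: "x2 \<in> layer V dp n"
  shows "x1 = x2"
proof (rule ccontr)
  assume "x1 \<noteq> x2"
  let ?b = "\<lambda>x. U (delta_at x) (0, n)"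
  have V: "x1 \<in> V" "x2 \<in> V" using x1 x2 by (auto simp: layer_def)
  have "?b x1 * cnj (?b x2) = inner_on {(0, n)} (U (delta_at x1)) (U (delta_at x2))"
    by (simp add: inner_on_def)
  also have "\<dots> = inner_on {x2} (delta_at x1) (delta_at x2)"
  proof (rule unitary_between_inner_on[OF unitary delta_at_l2[OF V(1)]])
    show "U (delta_at x2) y = 0" if "y \<notin> {(0, n)}" for y
      using fun_cong[OF U_delta_at_layer[OF x2], of y] that by (simp add: delta_at_def)
  qed (use single_copy V in \<open>auto simp: delta_at_def\<close>)
  also have "\<dots> = 0" using \<open>x1 \<noteq> x2\<close> by (simp add: inner_on_def delta_at_def)
  finally obtain x where x: "x \<in> {x1, x2}" "?b x = 0" by auto
  have "x \<in> layer V dp n" using x(1) x1 x2 by auto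
  then have "U (delta_at x) = (\<lambda>y. ?b x * delta_at (0, n) y)" by (rule U_delta_at_layer)
  with x(2) have "sqnorm D (U (delta_at x)) = 0" by (simp add: sqnorm_def)
  moreover have "x \<in> V" using x(1) V by auto
  ultimately show False using sqnorm_U_delta_at by simp
qed

lemma iso_to_nat: "iso_to_nat V E"
  using layer_subsingleton layer_nonempty[OF leafless] by (rule iso_to_nat_if_layers_singletons)

end

theorem iso_to_nat_if_dirichlet_shift_equivalent:
  assumes "rooted_directed_tree V E" "leafless V E" "locally_finite V E" "q > 1"
    and "unitarily_equivalent V (dirichlet_shift V E q) ({..<m} \<times> (UNIV :: nat set))
      (classical_dirichlet_sum m q)"
  shows "iso_to_nat V E"
proof -
  obtain U where "unitary_between V ({..<m} \<times> UNIV) U"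
    and "\<forall>f\<in>l2 V. U (dirichlet_shift V E q f) = classical_dirichlet_sum m q (U f)"
    using assms(5) unfolding unitarily_equivalent_def by blast
  then interpret dirichlet_equivalence V E q m U
    using assms(1-4) by unfold_locales (simp_all add: rooted_tree_def)
  show ?thesis by (rule iso_to_nat)
qed

theorem mainTheorem6:
  fixes V :: "'v set" and E :: "('v \<times> 'v) set" and q :: real
  assumes "rooted_directed_tree V E"
    and "leafless V E"
    and "locally_finite V E"
    and "countable V" and "infinite V"
    and "finite_branching_index V E"
    and "q \<ge> 1"
  shows "(\<exists>m::nat. unitarily_equivalent V (dirichlet_shift V E q)
                     ({..<m} \<times> (UNIV :: nat set)) (classical_dirichlet_sum m q))
         \<longleftrightarrow> (q = 1 \<or> iso_to_nat V E)"
  using dirichlet_shift_equivalent_if_q_1_or_iso_to_nat[OF assms(1-3,6,7)]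
    iso_to_nat_if_dirichlet_shift_equivalent[OF assms(1-3)] assms(7)
  by (metis le_less)

end
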